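(* In the setting of the context, there exist universal positive constants $L_1,U_1,L_2,U_2,\bar L_1,\bar U_1,\bar L_2,\bar U_2$ such that for sufficiently large $n$, with probability at least $1-8e^{-\sqrt n}$ over the training data, $$\mathsf{SU}_r^L(n)\le\mathsf{SU}_r(1;n)\le\mathsf{SU}_r^U(n)\quad\text{and}\quad \bar{\mathsf{SU}}_r^L(n)\le 1-\mathsf{SU}_r(1;n)\le\bar{\mathsf{SU}}_r^U(n),$$ where $$\mathsf{SU}_r^L(n)=\begin{cases}(1+L_1n^{q-(1-r)})^{-1},&q<1-r\\ L_2n^{(1-r)-q},&q>1-r\end{cases},\quad \mathsf{SU}_r^U(n)=\begin{cases}(1+U_1n^{q-(1-r)})^{-1},&q<1-r\\ U_2n^{(1-r)-q},&q>1-r\end{cases},$$ $$\bar{\mathsf{SU}}_r^L(n)=\begin{cases}\bar L_1n^{q-(1-r)},&q<1-r\\ (1+\bar L_2n^{(1-r)-q})^{-1},&q>1-r\end{cases},\quad \bar{\mathsf{SU}}_r^U(n)=\begin{cases}\bar U_1n^{q-(1-r)},&q<1-r\\ (1+\bar U_2n^{(1-r)-q})^{-1},&q>1-r\end{cases}.$$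
   Context: Bi-level ensemble with fixed parameters $p>1$, $0\le r<1$, $0<q<p-r$: $d=n^p$, $s=n^r$, $a=n^{-q}$, $\boldsymbol\Sigma=\mathrm{diag}(\lambda_1,\dots,\lambda_d)$ with $\lambda_j=\frac{ad}{s}$ for $j\le s$ and $\frac{(1-a)d}{d-s}$ for $j>s$. Training features $\boldsymbol\phi(X_i)\sim\mathcal N(\mathbf0,\boldsymbol\Sigma)$ i.i.d., $i\le n$, rows of $\boldsymbol\Phi_{\mathsf{train}}$. Target $\boldsymbol\alpha^*=\mathbf e_1/\sqrt{\lambda_1}$, real outputs $Z_i=\langle\boldsymbol\phi(X_i),\boldsymbol\alpha^*\rangle$. $\widehat{\boldsymbol\alpha}_{2,\mathsf{real}}$ is the minimum-$\ell_2$-norm solution of $\boldsymbol\Phi_{\mathsf{train}}\boldsymbol\alpha=\mathbf Z_{\mathsf{train}}$, and $\mathsf{SU}_r(1;n)=\sqrt{\lambda_1}(\widehat{\boldsymbol\alpha}_{2,\mathsf{real}})_1$. *)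

theory Defs
  imports "HOL-Probability.Probability"
begin

text \<open>Bi-level ensemble. Dimensions d = n^p, s = n^r are rounded down to integers.
Coordinates are 0-indexed: coordinate j (0-based) corresponds to paper index j+1.\<close>

definition bl_d :: "nat \<Rightarrow> real \<Rightarrow> nat" where
  "bl_d n p = nat \<lfloor>real n powr p\<rfloor>"

definition bl_s :: "nat \<Rightarrow> real \<Rightarrow> nat" where
  "bl_s n r = nat \<lfloor>real n powr r\<rfloor>"

definition bl_a :: "nat \<Rightarrow> real \<Rightarrow> real" where
  "bl_a n q = real n powr (- q)"

definition bl_lambda :: "nat \<Rightarrow> real \<Rightarrow> real \<Rightarrow> real \<Rightarrow> nat \<Rightarrow> real" where
  "bl_lambda n p q r j =
     (let d = real (bl_d n p); s = real (bl_s n r); a = bl_a n q in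
      if j < bl_s n r then a * d / s else (1 - a) * d / (d - s))"

text \<open>Law of the training feature matrix Phi (n x d): rows i.i.d. N(0, Sigma) with
Sigma diagonal, i.e. all entries independent, entry (i,j) ~ N(0, lambda_j).\<close>
definition bl_train_measure :: "nat \<Rightarrow> real \<Rightarrow> real \<Rightarrow> real \<Rightarrow> ((nat \<times> nat) \<Rightarrow> real) measure" where
  "bl_train_measure n p q r =
     PiM ({..<n} \<times> {..<bl_d n p})
         (\<lambda>(i, j). density lborel (normal_density 0 (sqrt (bl_lambda n p q r j))))"

definition min_norm_sol :: "nat \<Rightarrow> nat \<Rightarrow> (nat \<Rightarrow> nat \<Rightarrow> real) \<Rightarrow> (nat \<Rightarrow> real) \<Rightarrow> (nat \<Rightarrow> real)" where
  "min_norm_sol n d Phi Z =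
     (THE alpha. (\<forall>j\<ge>d. alpha j = 0) \<and>
        (\<forall>i<n. (\<Sum>j<d. Phi i j * alpha j) = Z i) \<and>
        (\<forall>beta. (\<forall>i<n. (\<Sum>j<d. Phi i j * beta j) = Z i) \<longrightarrow>
                 (\<Sum>j<d. (alpha j)\<^sup>2) \<le> (\<Sum>j<d. (beta j)\<^sup>2)))"

definition SU1 :: "nat \<Rightarrow> real \<Rightarrow> real \<Rightarrow> real \<Rightarrow> ((nat \<times> nat) \<Rightarrow> real) \<Rightarrow> real" where
  "SU1 n p q r omega =
     (let d = bl_d n p; lam1 = bl_lambda n p q r 0;
          Phi = (\<lambda>i j. omega (i, j));
          alpha_star = (\<lambda>j. if j = 0 then 1 / sqrt lam1 else 0);
          Z = (\<lambda>i. \<Sum>j<d. Phi i j * alpha_star j)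
      in sqrt lam1 * min_norm_sol n d Phi Z 0)"

end

theory Submission
  imports Defs "HOL-Real_Asymp.Real_Asymp"
begin

(* Let x be the first column of the feature matrix Phi and u a solution of the Gram system
   Phi Phi^T u = x.  The minimum-norm interpolator is Phi^T u / sqrt lambda_1, so the survival
   is sig = <u, x>, and sig - sig^2 is the squared norm of Phi^T u off the first coordinate.
   Suppose the Gram matrix of the bulk columns is comparable to (1 - a) d and the spike block
   satisfies |Phi_S w|^2 ~ n lambda_1 |w|^2.  Then two Cauchy-Schwarz arguments (one with u,
   one with the residual of x after projecting out the other spike columns) pin the odds
   sig / (1 - sig) within constant factors of n lambda_1 / ((1 - a) d) ~ n^(1 - r - q), which
   gives both regimes.  The spectral conditions fail with probability at most 6 exp (- sqrt n):
   each quadratic form is controlled on a finite grid of the unit ball by a Chernoff bound for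
   sums of squared Gaussians, then everywhere by rounding to the grid. *)

section \<open>Minimum-norm interpolation\<close>

lemma orthogonal_residual_exists:
  fixes b :: "nat \<Rightarrow> real" and c :: "nat \<Rightarrow> nat \<Rightarrow> real"
  shows "\<exists>w. \<forall>j<k. (\<Sum>l<N. (b l - (\<Sum>m<k. w m * c m l)) * c j l) = 0"
proof (induction k arbitrary: b)
  case 0
  show ?case by simp
next
  case (Suc k)
  define dot where "dot = (\<lambda>f g. \<Sum>l<N. f l * g l :: real)"
  have dot_diff: "dot (\<lambda>l. f l - t * g l) h = dot f h - t * dot g h" for f g h t
    by (simp add: dot_def algebra_simps sum_subtractf sum_distrib_left)
  have dot_add: "dot f (\<lambda>l. g l + h l) = dot f g + dot f h" for f g h
    by (simp add: dot_def algebra_simps sum.distrib)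
  have dot_span: "dot f (\<lambda>l. \<Sum>m<k. w m * c m l) = (\<Sum>m<k. w m * dot f (c m))" for f w
    by (simp add: dot_def sum_distrib_left sum_distrib_right algebra_simps; subst sum.swap; simp add: algebra_simps)
  obtain wb where wb: "\<forall>j<k. dot (\<lambda>l. b l - (\<Sum>m<k. wb m * c m l)) (c j) = 0"
    using Suc.IH unfolding dot_def by blast
  obtain wc where wc: "\<forall>j<k. dot (\<lambda>l. c k l - (\<Sum>m<k. wc m * c m l)) (c j) = 0"
    using Suc.IH unfolding dot_def by blast
  define r where "r = (\<lambda>l. b l - (\<Sum>m<k. wb m * c m l))"
  define r' where "r' = (\<lambda>l. c k l - (\<Sum>m<k. wc m * c m l))"
  \<comment> \<open>one Gram--Schmidt step: remove from \<open>r\<close> its component along \<open>r'\<close>\<close>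
  define t where "t = (if dot r' r' = 0 then 0 else dot r r' / dot r' r')"
  define w where "w = (\<lambda>m. if m < k then wb m - t * wc m else t)"
  have residual: "(\<lambda>l. b l - (\<Sum>m<Suc k. w m * c m l)) = (\<lambda>l. r l - t * r' l)"
  proof
    fix l
    have "(\<Sum>m<Suc k. w m * c m l) = (\<Sum>m<k. wb m * c m l) - t * (\<Sum>m<k. wc m * c m l) + t * c k l"
      by (simp add: w_def algebra_simps sum_subtractf sum_distrib_left)
    then show "b l - (\<Sum>m<Suc k. w m * c m l) = r l - t * r' l"
      by (simp add: r_def r'_def algebra_simps)
  qed
  have orth_r: "dot r (c j) = 0" and orth_r': "dot r' (c j) = 0" if "j < k" for j
    using wb wc that by (simp_all add: r_def r'_def)
  have "dot (\<lambda>l. r l - t * r' l) r' = 0"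
  proof (cases "dot r' r' = 0")
    case True
    then have "\<forall>l\<in>{..<N}. r' l * r' l = 0"
      by (subst sum_nonneg_eq_0_iff[symmetric]) (auto simp: dot_def)
    then have "dot r r' = 0" by (auto simp: dot_def)
    then show ?thesis using True by (simp add: dot_diff t_def)
  next
    case False
    have "dot (\<lambda>l. r l - t * r' l) r' = dot r r' - t * dot r' r'" by (rule dot_diff)
    then show ?thesis using False by (simp add: t_def)
  qed
  moreover have "dot (\<lambda>l. r l - t * r' l) (\<lambda>l. \<Sum>m<k. wc m * c m l) = 0"
    unfolding dot_span using dot_diff orth_r orth_r' by simp
  ultimately have "dot (\<lambda>l. r l - t * r' l) (c k) = 0"
    using dot_add[of "\<lambda>l. r l - t * r' l" r' "\<lambda>l. \<Sum>m<k. wc m * c m l"] by (simp add: r'_def)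
  then have "\<forall>j<Suc k. dot (\<lambda>l. r l - t * r' l) (c j) = 0"
    using dot_diff orth_r orth_r' by (auto simp: less_Suc_eq)
  then show ?case using residual unfolding dot_def by metis
qed

lemma gram_system_solvable:
  fixes Phi :: "nat \<Rightarrow> nat \<Rightarrow> real"
  shows "\<exists>u. \<forall>i<n. (\<Sum>j<d. Phi i j * (\<Sum>m<n. u m * Phi m j)) = (\<Sum>j<d. Phi i j * g j)"
proof -
  obtain w where w: "\<forall>i<n. (\<Sum>l<d. (g l - (\<Sum>m<n. w m * Phi m l)) * Phi i l) = 0"
    using orthogonal_residual_exists[where b=g and k=n and N=d and c=Phi] by blast
  have "(\<Sum>j<d. Phi i j * (\<Sum>m<n. w m * Phi m j)) = (\<Sum>j<d. Phi i j * g j)" if "i < n" for i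
  proof -
    have "0 = (\<Sum>l<d. (g l - (\<Sum>m<n. w m * Phi m l)) * Phi i l)"
      using w that by simp
    also have "\<dots> = (\<Sum>l<d. Phi i l * g l) - (\<Sum>l<d. Phi i l * (\<Sum>m<n. w m * Phi m l))"
      by (simp add: algebra_simps sum_subtractf)
    finally show ?thesis by simp
  qed
  then show ?thesis by blast
qed

lemma first_column_in_gram_range:
  fixes Phi :: "nat \<Rightarrow> nat \<Rightarrow> real"
  assumes "0 < d"
  shows "\<exists>u. \<forall>i<n. (\<Sum>j<d. Phi i j * (\<Sum>m<n. u m * Phi m j)) = Phi i 0"
proof -
  obtain u where "\<forall>i<n. (\<Sum>j<d. Phi i j * (\<Sum>m<n. u m * Phi m j))
      = (\<Sum>j<d. Phi i j * (if j = 0 then 1 else 0))"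
    using gram_system_solvable[where g="\<lambda>j. if j = 0 then 1 else 0"] by blast
  then show ?thesis using assms by (intro exI[of _ u]) (simp add: if_distrib cong: if_cong)
qed

lemma gram_bilinear:
  fixes Phi :: "nat \<Rightarrow> nat \<Rightarrow> real"
  assumes u: "\<forall>i<n. (\<Sum>j<d. Phi i j * (\<Sum>m<n. u m * Phi m j)) = x i"
  shows "(\<Sum>i<n. v i * x i) = (\<Sum>j<d. (\<Sum>i<n. v i * Phi i j) * (\<Sum>i<n. u i * Phi i j))"
proof -
  have "(\<Sum>i<n. v i * x i) = (\<Sum>i<n. v i * (\<Sum>j<d. Phi i j * (\<Sum>m<n. u m * Phi m j)))"
    using u by simp
  also have "\<dots> = (\<Sum>j<d. (\<Sum>i<n. v i * Phi i j) * (\<Sum>i<n. u i * Phi i j))"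
    by (simp add: sum_distrib_left sum_distrib_right algebra_simps; subst sum.swap; simp add: algebra_simps)
  finally show ?thesis .
qed

lemma row_combination_pythagoras:
  fixes Phi :: "nat \<Rightarrow> nat \<Rightarrow> real"
  assumes u: "\<forall>i<n. (\<Sum>j<d. Phi i j * (\<Sum>m<n. u m * Phi m j)) = Z i"
    and be: "\<forall>i<n. (\<Sum>j<d. Phi i j * be j) = Z i"
  defines "al \<equiv> \<lambda>j. \<Sum>m<n. u m * Phi m j"
  shows "(\<Sum>j<d. (be j)\<^sup>2) = (\<Sum>j<d. (al j)\<^sup>2) + (\<Sum>j<d. (be j - al j)\<^sup>2)"
proof -
  \<comment> \<open>\<open>al\<close> lies in the row space of \<open>Phi\<close> and \<open>be - al\<close> in its kernel\<close>
  define r where "r = (\<lambda>j. be j - al j)"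
  have "(\<Sum>j<d. al j * r j) = (\<Sum>m<n. u m * (\<Sum>j<d. Phi m j * r j))"
    unfolding al_def
    by (simp add: sum_distrib_left sum_distrib_right algebra_simps; subst sum.swap; simp)
  also have "\<dots> = (\<Sum>m<n. u m * ((\<Sum>j<d. Phi m j * be j) - (\<Sum>j<d. Phi m j * al j)))"
    by (simp add: r_def algebra_simps sum_subtractf)
  also have "\<dots> = 0" using u be by (simp add: al_def)
  finally have orth: "(\<Sum>j<d. al j * (be j - al j)) = 0" by (simp add: r_def)
  have "(\<Sum>j<d. (be j)\<^sup>2) = (\<Sum>j<d. (al j)\<^sup>2 + 2 * (al j * (be j - al j)) + (be j - al j)\<^sup>2)"
    by (rule sum.cong) (auto simp: power2_eq_square algebra_simps)
  also have "\<dots> = (\<Sum>j<d. (al j)\<^sup>2) + 2 * (\<Sum>j<d. al j * (be j - al j)) + (\<Sum>j<d. (be j - al j)\<^sup>2)"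
    by (simp add: sum.distrib sum_distrib_left)
  finally show ?thesis using orth by simp
qed

lemma min_norm_sol_eq_row_combination:
  fixes Phi :: "nat \<Rightarrow> nat \<Rightarrow> real"
  assumes u: "\<forall>i<n. (\<Sum>j<d. Phi i j * (\<Sum>m<n. u m * Phi m j)) = Z i"
  shows "min_norm_sol n d Phi Z = (\<lambda>j. if j < d then \<Sum>m<n. u m * Phi m j else 0)"
proof -
  define al where "al = (\<lambda>j. if j < d then \<Sum>m<n. u m * Phi m j else 0)"
  have feas: "\<forall>i<n. (\<Sum>j<d. Phi i j * al j) = Z i"
    using u by (simp add: al_def)
  have pyth: "(\<Sum>j<d. (be j)\<^sup>2) = (\<Sum>j<d. (al j)\<^sup>2) + (\<Sum>j<d. (be j - al j)\<^sup>2)"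
    if "\<forall>i<n. (\<Sum>j<d. Phi i j * be j) = Z i" for be
    using row_combination_pythagoras[OF u that] by (simp add: al_def)
  show ?thesis
    unfolding min_norm_sol_def al_def[symmetric]
  proof (rule the_equality)
    show "(\<forall>j\<ge>d. al j = 0) \<and> (\<forall>i<n. (\<Sum>j<d. Phi i j * al j) = Z i) \<and>
      (\<forall>beta. (\<forall>i<n. (\<Sum>j<d. Phi i j * beta j) = Z i) \<longrightarrow> (\<Sum>j<d. (al j)\<^sup>2) \<le> (\<Sum>j<d. (beta j)\<^sup>2))"
    proof (intro conjI allI impI)
      fix beta assume "\<forall>i<n. (\<Sum>j<d. Phi i j * beta j) = Z i"
      from pyth[OF this] show "(\<Sum>j<d. (al j)\<^sup>2) \<le> (\<Sum>j<d. (beta j)\<^sup>2)"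
        by (simp add: sum_nonneg)
    qed (use feas in \<open>auto simp: al_def\<close>)
  next
    fix a assume a: "(\<forall>j\<ge>d. a j = 0) \<and> (\<forall>i<n. (\<Sum>j<d. Phi i j * a j) = Z i) \<and>
      (\<forall>beta. (\<forall>i<n. (\<Sum>j<d. Phi i j * beta j) = Z i) \<longrightarrow> (\<Sum>j<d. (a j)\<^sup>2) \<le> (\<Sum>j<d. (beta j)\<^sup>2))"
    then have "(\<Sum>j<d. (a j)\<^sup>2) \<le> (\<Sum>j<d. (al j)\<^sup>2)" using feas by blast
    moreover have "(\<Sum>j<d. (a j)\<^sup>2) = (\<Sum>j<d. (al j)\<^sup>2) + (\<Sum>j<d. (a j - al j)\<^sup>2)"
      using pyth a by blast
    ultimately have "(\<Sum>j<d. (a j - al j)\<^sup>2) = 0"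
      by (smt (verit) sum_nonneg zero_le_power2)
    then have "\<forall>j\<in>{..<d}. (a j - al j)\<^sup>2 = 0"
      by (subst sum_nonneg_eq_0_iff[symmetric]) auto
    then show "a = al" using a by (auto simp: al_def fun_eq_iff not_less)
  qed
qed

lemma SU1_eq_gram_form:
  assumes d: "0 < bl_d n p" and lam: "0 < bl_lambda n p q r 0"
    and u: "\<forall>i<n. (\<Sum>j<bl_d n p. omega (i, j) * (\<Sum>m<n. u m * omega (m, j))) = omega (i, 0)"
  shows "SU1 n p q r omega = (\<Sum>m<n. u m * omega (m, 0))"
proof -
  define c where "c = sqrt (bl_lambda n p q r 0)"
  define Z where "Z = (\<lambda>i. \<Sum>j<bl_d n p. omega (i, j) * (if j = 0 then 1 / c else 0))"
  have Z: "Z i = omega (i, 0) / c" for i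
    using d by (simp add: Z_def if_distrib cong: if_cong)
  define v where "v = (\<lambda>m. u m / c)"
  have v: "\<forall>i<n. (\<Sum>j<bl_d n p. omega (i, j) * (\<Sum>m<n. v m * omega (m, j))) = Z i"
  proof (intro allI impI)
    fix i assume "i < n"
    have "(\<Sum>j<bl_d n p. omega (i, j) * (\<Sum>m<n. v m * omega (m, j)))
        = (\<Sum>j<bl_d n p. omega (i, j) * (\<Sum>m<n. u m * omega (m, j))) / c"
      by (simp add: v_def sum_divide_distrib sum_distrib_left)
    also have "\<dots> = omega (i, 0) / c" using u \<open>i < n\<close> by simp
    also have "\<dots> = Z i" by (rule Z[symmetric])
    finally show "(\<Sum>j<bl_d n p. omega (i, j) * (\<Sum>m<n. v m * omega (m, j))) = Z i" .
  qed
  have "SU1 n p q r omega = c * min_norm_sol n (bl_d n p) (\<lambda>i j. omega (i, j)) Z 0"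
    unfolding SU1_def Let_def c_def Z_def by simp
  also have "min_norm_sol n (bl_d n p) (\<lambda>i j. omega (i, j)) Z 0 = (\<Sum>m<n. v m * omega (m, 0))"
    using min_norm_sol_eq_row_combination[where Phi="\<lambda>i j. omega (i, j)", OF v] d by simp
  also have "c * (\<Sum>m<n. v m * omega (m, 0)) = (\<Sum>m<n. u m * omega (m, 0))"
    using lam by (simp add: v_def c_def sum_distrib_left)
  finally show ?thesis .
qed

section \<open>Survival bounds from spectral bounds\<close>

lemma gram_form_tail_sum_sq:
  fixes Phi :: "nat \<Rightarrow> nat \<Rightarrow> real"
  assumes d: "0 < d"
    and u: "\<forall>i<n. (\<Sum>j<d. Phi i j * (\<Sum>m<n. u m * Phi m j)) = Phi i 0"
  defines "sig \<equiv> \<Sum>i<n. u i * Phi i 0"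
  shows "(\<Sum>j\<in>{1..<d}. (\<Sum>i<n. u i * Phi i j)\<^sup>2) = sig - sig\<^sup>2"
proof -
  have "sig = (\<Sum>j<d. (\<Sum>i<n. u i * Phi i j)\<^sup>2)"
    using gram_bilinear[OF u, of u] by (simp add: sig_def power2_eq_square)
  also have "\<dots> = sig\<^sup>2 + (\<Sum>j\<in>{1..<d}. (\<Sum>i<n. u i * Phi i j)\<^sup>2)"
    using sum.atLeast_Suc_lessThan[OF d, of "\<lambda>j. (\<Sum>i<n. u i * Phi i j)\<^sup>2"]
    by (simp add: atLeast0LessThan sig_def)
  finally show ?thesis by simp
qed

lemma gram_form_upper_bound:
  fixes Phi :: "nat \<Rightarrow> nat \<Rightarrow> real"
  assumes s: "1 \<le> s" "s \<le> d" and cB: "0 < cB"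
    and bulk_lower: "\<And>v. cB * (\<Sum>i<n. (v i)\<^sup>2) \<le> (\<Sum>j\<in>{s..<d}. (\<Sum>i<n. v i * Phi i j)\<^sup>2)"
    and x_pos: "0 < (\<Sum>i<n. (Phi i 0)\<^sup>2)" and x_le: "(\<Sum>i<n. (Phi i 0)\<^sup>2) \<le> CX"
    and u: "\<forall>i<n. (\<Sum>j<d. Phi i j * (\<Sum>m<n. u m * Phi m j)) = Phi i 0"
  defines "sig \<equiv> \<Sum>i<n. u i * Phi i 0"
  shows "0 < sig \<and> sig < 1 \<and> cB * sig \<le> CX * (1 - sig)"
proof -
  define nu where "nu = (\<Sum>i<n. (u i)\<^sup>2)"
  have "(\<Sum>j\<in>{s..<d}. (\<Sum>i<n. u i * Phi i j)\<^sup>2) \<le> (\<Sum>j\<in>{1..<d}. (\<Sum>i<n. u i * Phi i j)\<^sup>2)"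
    using s by (intro sum_mono2) auto
  also have "\<dots> = sig - sig\<^sup>2"
    unfolding sig_def using s by (intro gram_form_tail_sum_sq u) simp
  finally have bulk_u: "cB * nu \<le> sig - sig\<^sup>2"
    using bulk_lower[of u] by (simp add: nu_def)
  have nu_pos: "0 < nu"
  proof (rule ccontr)
    assume "\<not> 0 < nu"
    moreover have "0 \<le> nu" by (simp add: nu_def sum_nonneg)
    ultimately have "nu = 0" by simp
    then have "\<forall>i\<in>{..<n}. (u i)\<^sup>2 = 0"
      unfolding nu_def by (subst sum_nonneg_eq_0_iff[symmetric]) auto
    then have "\<forall>i<n. Phi i 0 = 0" using u by simp
    then show False using x_pos by simp
  qed
  \<comment> \<open>\<open>sig (1 - sig)\<close> is a positive sum of squares\<close>
  have "0 < sig * (1 - sig)"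
    using bulk_u mult_pos_pos[OF cB nu_pos] by (simp add: power2_eq_square algebra_simps)
  then have sig01: "0 < sig" "sig < 1"
    by (auto simp: zero_less_mult_iff)
  have "sig\<^sup>2 \<le> nu * (\<Sum>i<n. (Phi i 0)\<^sup>2)"
    unfolding sig_def nu_def by (rule Cauchy_Schwarz_ineq_sum)
  also have "\<dots> \<le> nu * CX" using x_le nu_pos by simp
  finally have "cB * sig\<^sup>2 \<le> (cB * nu) * CX"
    using cB by (simp add: mult_left_mono)
  also have "\<dots> \<le> (sig - sig\<^sup>2) * CX"
    using bulk_u x_pos x_le by (intro mult_right_mono) auto
  finally have "sig * (cB * sig) \<le> sig * (CX * (1 - sig))"
    by (simp add: power2_eq_square algebra_simps)
  then show ?thesis
    using sig01 by (simp add: mult_le_cancel_left_pos)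
qed

lemma first_column_residual:
  fixes Phi :: "nat \<Rightarrow> nat \<Rightarrow> real"
  assumes s: "1 \<le> s" and cS: "0 \<le> cS"
    and spike_lower: "\<And>w. cS * (\<Sum>j<s. (w j)\<^sup>2) \<le> (\<Sum>i<n. (\<Sum>j<s. w j * Phi i j)\<^sup>2)"
  shows "\<exists>y. cS \<le> (\<Sum>i<n. (y i)\<^sup>2) \<and> (\<Sum>i<n. y i * Phi i 0) = (\<Sum>i<n. (y i)\<^sup>2) \<and>
      (\<forall>j\<in>{1..<s}. (\<Sum>i<n. y i * Phi i j) = 0)"
proof -
  \<comment> \<open>\<open>y\<close>: the first column minus its projection onto the other spike columns\<close>
  obtain w where w: "\<forall>j<s - 1. (\<Sum>i<n. (Phi i 0 - (\<Sum>m<s - 1. w m * Phi i (Suc m))) * Phi i (Suc j)) = 0"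
    using orthogonal_residual_exists[where b="\<lambda>i. Phi i 0" and k="s - 1" and N=n
        and c="\<lambda>m i. Phi i (Suc m)"] by blast
  define v where "v = (\<lambda>k. if k = 0 then 1 else - w (k - 1))"
  define y where "y = (\<lambda>i. \<Sum>k<s. v k * Phi i k)"
  have y_eq: "y i = Phi i 0 - (\<Sum>m<s - 1. w m * Phi i (Suc m))" for i
  proof -
    have "y i = (\<Sum>k<Suc (s - 1). v k * Phi i k)" using s by (simp add: y_def)
    also have "\<dots> = v 0 * Phi i 0 + (\<Sum>m<s - 1. v (Suc m) * Phi i (Suc m))"
      by (rule sum.lessThan_Suc_shift)
    finally show ?thesis by (simp add: v_def sum_negf)
  qed
  have orth: "(\<Sum>i<n. y i * Phi i j) = 0" if "j \<in> {1..<s}" for j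
  proof -
    have "j - 1 < s - 1" "Suc (j - 1) = j" using that by auto
    from w[rule_format, OF this(1)] this(2) show ?thesis by (simp add: y_eq)
  qed
  have v1: "1 \<le> (\<Sum>k<s. (v k)\<^sup>2)"
    using member_le_sum[of 0 "{..<s}" "\<lambda>k. (v k)\<^sup>2"] s by (simp add: v_def)
  have cS_le: "cS \<le> (\<Sum>i<n. (y i)\<^sup>2)"
    using mult_left_mono[OF v1 cS] spike_lower[of v] by (simp add: y_def)
  have "(\<Sum>i<n. (y i)\<^sup>2) = (\<Sum>k<s. v k * (\<Sum>i<n. y i * Phi i k))"
    unfolding power2_eq_square y_def
    by (simp add: sum_distrib_left sum_distrib_right algebra_simps; subst sum.swap; simp add: algebra_simps)
  also have "\<dots> = (\<Sum>i<n. y i * Phi i 0)"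
    using s orth sum.atLeast_Suc_lessThan[of 0 s "\<lambda>k. v k * (\<Sum>i<n. y i * Phi i k)"]
    by (simp add: atLeast0LessThan v_def)
  finally have "(\<Sum>i<n. y i * Phi i 0) = (\<Sum>i<n. (y i)\<^sup>2)" by simp
  with cS_le orth show ?thesis by blast
qed

lemma gram_form_lower_bound:
  fixes Phi :: "nat \<Rightarrow> nat \<Rightarrow> real"
  assumes s: "1 \<le> s" "s \<le> d" and cS: "0 < cS"
    and spike_lower: "\<And>w. cS * (\<Sum>j<s. (w j)\<^sup>2) \<le> (\<Sum>i<n. (\<Sum>j<s. w j * Phi i j)\<^sup>2)"
    and bulk_upper: "\<And>v. (\<Sum>j\<in>{s..<d}. (\<Sum>i<n. v i * Phi i j)\<^sup>2) \<le> CB * (\<Sum>i<n. (v i)\<^sup>2)"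
    and u: "\<forall>i<n. (\<Sum>j<d. Phi i j * (\<Sum>m<n. u m * Phi m j)) = Phi i 0"
    and sig1: "(\<Sum>i<n. u i * Phi i 0) < 1"
  shows "cS * (1 - (\<Sum>i<n. u i * Phi i 0)) \<le> CB * (\<Sum>i<n. u i * Phi i 0)"
proof -
  define sig where "sig = (\<Sum>i<n. u i * Phi i 0)"
  define W where "W = (\<lambda>j y. \<Sum>i<n. y i * Phi i j)"
  obtain y where ny_lo: "cS \<le> (\<Sum>i<n. (y i)\<^sup>2)" and W0y: "W 0 y = (\<Sum>i<n. (y i)\<^sup>2)"
    and Wy: "\<And>j. j \<in> {1..<s} \<Longrightarrow> W j y = 0"
    using first_column_residual[OF s(1) less_imp_le[OF cS] spike_lower] unfolding W_def by blast
  define ny where "ny = (\<Sum>i<n. (y i)\<^sup>2)"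
  have bulk_y: "(\<Sum>j\<in>{1..<d}. (W j y)\<^sup>2) \<le> CB * ny"
  proof -
    have "{1..<d} = {1..<s} \<union> {s..<d}" using s by auto
    then have "(\<Sum>j\<in>{1..<d}. (W j y)\<^sup>2) = (\<Sum>j\<in>{s..<d}. (W j y)\<^sup>2)"
      using Wy by (simp add: sum.union_disjoint ivl_disj_int)
    then show ?thesis using bulk_upper[of y] by (simp add: W_def ny_def)
  qed
  have rest_u: "(\<Sum>j\<in>{1..<d}. (W j u)\<^sup>2) = sig - sig\<^sup>2"
    unfolding sig_def W_def using s by (intro gram_form_tail_sum_sq u) simp
  have "(\<Sum>i<n. y i * Phi i 0) = (\<Sum>j<d. W j y * W j u)"
    using gram_bilinear[OF u, of y] by (simp add: W_def)
  also have "\<dots> = W 0 y * W 0 u + (\<Sum>j\<in>{1..<d}. W j y * W j u)"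
    using s sum.atLeast_Suc_lessThan[of 0 d "\<lambda>j. W j y * W j u"] by (simp add: atLeast0LessThan)
  finally have cross: "(\<Sum>j\<in>{1..<d}. W j y * W j u) = (1 - sig) * ny"
    using W0y by (simp add: W_def sig_def ny_def algebra_simps)
  have "((1 - sig) * ny)\<^sup>2 \<le> (\<Sum>j\<in>{1..<d}. (W j y)\<^sup>2) * (\<Sum>j\<in>{1..<d}. (W j u)\<^sup>2)"
    unfolding cross[symmetric] by (rule Cauchy_Schwarz_ineq_sum)
  also have "\<dots> \<le> (CB * ny) * (sig - sig\<^sup>2)"
    unfolding rest_u[symmetric] using bulk_y by (intro mult_right_mono sum_nonneg) auto
  finally have "((1 - sig) * ny) * ((1 - sig) * ny) \<le> ((1 - sig) * ny) * (CB * sig)"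
    by (simp add: power2_eq_square algebra_simps)
  moreover have "0 < (1 - sig) * ny" using sig1 ny_lo cS by (simp add: sig_def ny_def)
  ultimately have "(1 - sig) * ny \<le> CB * sig" by (simp add: mult_le_cancel_left_pos)
  moreover have "cS * (1 - sig) \<le> ny * (1 - sig)"
    using ny_lo sig1 by (intro mult_right_mono) (auto simp: sig_def ny_def)
  ultimately show ?thesis by (simp add: sig_def mult.commute)
qed

section \<open>Quadratic forms controlled on a grid\<close>

definition grid :: "nat \<Rightarrow> (nat \<Rightarrow> int) set" where
  "grid N = PiE {..<N} (\<lambda>_. {-(16 * int N)..16 * int N})"

definition grid_vec :: "nat \<Rightarrow> (nat \<Rightarrow> int) \<Rightarrow> nat \<Rightarrow> real" where
  "grid_vec N k i = real_of_int (k i) / (16 * real N)"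

lemma finite_grid: "finite (grid N)"
  by (simp add: grid_def finite_PiE)

lemma card_grid: "card (grid N) = (32 * N + 1) ^ N"
proof -
  have "card {-(16 * int N)..16 * int N} = 32 * N + 1" by simp
  then show ?thesis by (simp add: grid_def card_PiE)
qed

lemma grid_approx:
  assumes N: "0 < N" and u: "(\<Sum>i<N. (u i)\<^sup>2) = 1"
  shows "\<exists>k\<in>grid N. (\<Sum>i<N. (u i - grid_vec N k i)\<^sup>2) \<le> 1 / (1024 * real N)"
proof -
  define k where "k = restrict (\<lambda>i. round (u i * (16 * real N))) {..<N}"
  have round: "\<bar>real_of_int (k i) - u i * (16 * real N)\<bar> \<le> 1/2" if "i < N" for i
    using that of_int_round_abs_le by (simp add: k_def)
  have k_grid: "k \<in> grid N"
  proof -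
    have "k i \<in> {-(16 * int N)..16 * int N}" if i: "i < N" for i
    proof -
      have "(u i)\<^sup>2 \<le> 1\<^sup>2" using u member_le_sum[of i "{..<N}" "\<lambda>i. (u i)\<^sup>2"] i by simp
      then have "\<bar>u i\<bar> \<le> 1" by (metis abs_le_square_iff abs_one)
      then have "\<bar>u i\<bar> * (16 * real N) \<le> 1 * (16 * real N)"
        by (intro mult_right_mono) auto
      then have "\<bar>u i * (16 * real N)\<bar> \<le> 16 * real N" by (simp add: abs_mult)
      then have "\<bar>real_of_int (k i)\<bar> < 16 * real N + 1" using round[OF i] by linarith
      then have "\<bar>k i\<bar> < 16 * int N + 1" by linarith
      then show ?thesis by (simp add: abs_le_iff)
    qed
    then show ?thesis by (auto simp: grid_def k_def PiE_def extensional_def)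
  qed
  have "\<bar>u i - grid_vec N k i\<bar> \<le> 1 / (32 * real N)" if "i < N" for i
    using round[OF that] N
    by (simp add: grid_vec_def field_simps abs_minus_commute flip: abs_mult)
  then have "(\<Sum>i<N. (u i - grid_vec N k i)\<^sup>2) \<le> (\<Sum>i<N. (1 / (32 * real N))\<^sup>2)"
    by (intro sum_mono) (simp add: abs_le_square_iff[symmetric] abs_le_iff)
  also have "\<dots> = 1 / (1024 * real N)" using N by (simp add: power2_eq_square field_simps)
  finally show ?thesis using k_grid by blast
qed

lemma sum_sq_matrix_vector_le:
  fixes M :: "nat \<Rightarrow> nat \<Rightarrow> real"
  shows "(\<Sum>t\<in>T. (\<Sum>i<N. v i * M t i)\<^sup>2) \<le> (\<Sum>i<N. (v i)\<^sup>2) * (\<Sum>t\<in>T. \<Sum>i<N. (M t i)\<^sup>2)"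
proof -
  have "(\<Sum>t\<in>T. (\<Sum>i<N. v i * M t i)\<^sup>2) \<le> (\<Sum>t\<in>T. (\<Sum>i<N. (v i)\<^sup>2) * (\<Sum>i<N. (M t i)\<^sup>2))"
    by (intro sum_mono Cauchy_Schwarz_ineq_sum)
  then show ?thesis by (simp add: sum_distrib_left)
qed

lemma quadratic_form_bounds_of_unit:
  fixes M :: "nat \<Rightarrow> nat \<Rightarrow> real"
  assumes unit: "\<And>v. (\<Sum>i<N. (v i)\<^sup>2) = 1 \<Longrightarrow>
      c \<le> (\<Sum>t\<in>T. (\<Sum>i<N. v i * M t i)\<^sup>2) \<and> (\<Sum>t\<in>T. (\<Sum>i<N. v i * M t i)\<^sup>2) \<le> C"
  shows "c * (\<Sum>i<N. (u i)\<^sup>2) \<le> (\<Sum>t\<in>T. (\<Sum>i<N. u i * M t i)\<^sup>2) \<and>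
         (\<Sum>t\<in>T. (\<Sum>i<N. u i * M t i)\<^sup>2) \<le> C * (\<Sum>i<N. (u i)\<^sup>2)"
proof (cases "(\<Sum>i<N. (u i)\<^sup>2) = 0")
  case True
  then have "\<forall>i\<in>{..<N}. (u i)\<^sup>2 = 0" by (subst sum_nonneg_eq_0_iff[symmetric]) auto
  then show ?thesis using True by simp
next
  case False
  define nu where "nu = (\<Sum>i<N. (u i)\<^sup>2)"
  have nu0: "0 < nu" using False by (simp add: nu_def sum_nonneg order_le_neq_trans)
  define v where "v = (\<lambda>i. u i / sqrt nu)"
  have "(\<Sum>i<N. (v i)\<^sup>2) = 1"
    using nu0 by (simp add: v_def power_divide nu_def flip: sum_divide_distrib)
  then have bounds: "nu * c \<le> nu * (\<Sum>t\<in>T. (\<Sum>i<N. v i * M t i)\<^sup>2)"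
      "nu * (\<Sum>t\<in>T. (\<Sum>i<N. v i * M t i)\<^sup>2) \<le> nu * C"
    using unit nu0 by (simp_all add: mult_left_mono)
  have "(\<Sum>i<N. u i * M t i)\<^sup>2 = nu * (\<Sum>i<N. v i * M t i)\<^sup>2" for t
  proof -
    have "(\<Sum>i<N. u i * M t i) = sqrt nu * (\<Sum>i<N. v i * M t i)"
      using nu0 by (simp add: v_def sum_distrib_left)
    then show ?thesis using nu0 by (simp add: power_mult_distrib)
  qed
  then have "(\<Sum>t\<in>T. (\<Sum>i<N. u i * M t i)\<^sup>2) = nu * (\<Sum>t\<in>T. (\<Sum>i<N. v i * M t i)\<^sup>2)"
    by (simp add: sum_distrib_left)
  then show ?thesis using bounds by (simp add: nu_def mult.commute)
qed

lemma quadratic_form_bounds_of_grid: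
  fixes M :: "nat \<Rightarrow> nat \<Rightarrow> real"
  assumes N: "0 < N" and V: "0 < V"
    and net: "\<And>k. k \<in> grid N \<Longrightarrow> 0 < (\<Sum>i<N. (grid_vec N k i)\<^sup>2) \<Longrightarrow>
       V / 4 * (\<Sum>i<N. (grid_vec N k i)\<^sup>2) \<le> (\<Sum>t\<in>T. (\<Sum>i<N. grid_vec N k i * M t i)\<^sup>2) \<and>
       (\<Sum>t\<in>T. (\<Sum>i<N. grid_vec N k i * M t i)\<^sup>2) \<le> 4 * V * (\<Sum>i<N. (grid_vec N k i)\<^sup>2)"
    and frobenius: "(\<Sum>t\<in>T. \<Sum>i<N. (M t i)\<^sup>2) \<le> 4 * V * N"
  shows "V / 10 * (\<Sum>i<N. (u i)\<^sup>2) \<le> (\<Sum>t\<in>T. (\<Sum>i<N. u i * M t i)\<^sup>2) \<and>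
         (\<Sum>t\<in>T. (\<Sum>i<N. u i * M t i)\<^sup>2) \<le> 6 * V * (\<Sum>i<N. (u i)\<^sup>2)"
proof (rule quadratic_form_bounds_of_unit)
  \<comment> \<open>the rounding argument needs the triangle inequality, so work with the norms
    \<open>L v = \<parallel>M v\<parallel>\<close> and \<open>nr v = \<parallel>v\<parallel>\<close> rather than their squares\<close>
  define L where "L = (\<lambda>v. L2_set (\<lambda>t. \<Sum>i<N. v i * M t i) T)"
  define nr where "nr = (\<lambda>v::nat\<Rightarrow>real. L2_set v {..<N})"
  have L_sq: "(L v)\<^sup>2 = (\<Sum>t\<in>T. (\<Sum>i<N. v i * M t i)\<^sup>2)" for v
    by (simp add: L_def L2_set_def sum_nonneg)
  have nr_sq: "(nr v)\<^sup>2 = (\<Sum>i<N. (v i)\<^sup>2)" for v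
    by (simp add: nr_def L2_set_def sum_nonneg)
  have L0: "0 \<le> L v" and nr0: "0 \<le> nr v" for v by (simp_all add: L_def nr_def)
  have L_triangle: "L (\<lambda>i. a i + b i) \<le> L a + L b" for a b
  proof -
    have "(\<lambda>t. \<Sum>i<N. (a i + b i) * M t i) = (\<lambda>t. (\<Sum>i<N. a i * M t i) + (\<Sum>i<N. b i * M t i))"
      by (simp add: algebra_simps sum.distrib)
    then show ?thesis unfolding L_def by (simp add: L2_set_triangle_ineq)
  qed
  have nr_triangle: "nr (\<lambda>i. a i + b i) \<le> nr a + nr b" for a b
    unfolding nr_def by (rule L2_set_triangle_ineq)
  have L_uminus: "L (\<lambda>i. - a i) = L a" and nr_uminus: "nr (\<lambda>i. - a i) = nr a" for a
    by (simp_all add: L_def nr_def L2_set_def sum_negf)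
  define a where "a = sqrt V"
  have a0: "0 < a" and V_a: "V = a\<^sup>2" using V by (simp_all add: a_def)
  fix u :: "nat \<Rightarrow> real" assume u: "(\<Sum>i<N. (u i)\<^sup>2) = 1"
  then have nr_u: "nr u = 1"
    using nr_sq[of u] nr0[of u] by (simp add: power2_eq_1_iff)
  obtain k where k: "k \<in> grid N" and close: "(\<Sum>i<N. (u i - grid_vec N k i)\<^sup>2) \<le> 1 / (1024 * real N)"
    using grid_approx[OF N u] by blast
  define z where "z = grid_vec N k"
  define e where "e = (\<lambda>i. u i - z i)"
  have e_sq: "(\<Sum>i<N. (e i)\<^sup>2) \<le> 1 / (1024 * real N)" using close by (simp add: e_def z_def)
  have "1 / (1024 * real N) \<le> 1 / 1024" using N by (simp add: field_simps)
  then have "(nr e)\<^sup>2 \<le> (1/32)\<^sup>2" using e_sq unfolding nr_sq by (simp add: power2_eq_square)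
  then have nr_e: "nr e \<le> 1/32" using nr0 by (simp add: power2_le_iff_abs_le)
  have u_eq: "u = (\<lambda>i. z i + e i)" and z_eq: "z = (\<lambda>i. u i + - e i)" by (simp_all add: e_def)
  have nr_z: "31/32 \<le> nr z" "nr z \<le> 33/32"
    using nr_triangle[of z e, folded u_eq] nr_triangle[of u "\<lambda>i. - e i", folded z_eq]
      nr_e nr_u nr_uminus by simp_all
  then have "0 < (nr z)\<^sup>2" by simp
  then have "0 < (\<Sum>i<N. (z i)\<^sup>2)" by (simp add: nr_sq)
  from net[OF k this[unfolded z_def]]
  have "(a / 2 * nr z)\<^sup>2 \<le> (L z)\<^sup>2" "(L z)\<^sup>2 \<le> (2 * a * nr z)\<^sup>2"
    by (simp_all add: z_def L_sq power_mult_distrib nr_sq V_a power_divide)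
  then have Lz: "a / 2 * nr z \<le> L z" "L z \<le> 2 * a * nr z"
    using L0[of z] a0 nr0[of z] by (simp_all add: power2_le_iff_abs_le)
  \<comment> \<open>the rounding error is controlled by the Frobenius norm\<close>
  have "(\<Sum>i<N. (e i)\<^sup>2) * (\<Sum>t\<in>T. \<Sum>i<N. (M t i)\<^sup>2) \<le> 1 / (1024 * real N) * (4 * V * N)"
    using e_sq frobenius V by (intro mult_mono) (auto simp: sum_nonneg)
  then have "(L e)\<^sup>2 \<le> 1 / (1024 * real N) * (4 * V * N)"
    using sum_sq_matrix_vector_le[where v=e and M=M and T=T and N=N] unfolding L_sq[symmetric] by linarith
  also have "\<dots> = (a / 16)\<^sup>2" using N by (simp add: V_a power2_eq_square field_simps)
  finally have Le: "L e \<le> a / 16" using L0[of e] a0 by (simp add: power2_le_iff_abs_le)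
  have Lu_hi: "L u \<le> 68 / 32 * a"
    using L_triangle[of z e, folded u_eq] Lz(2) Le mult_left_mono[OF nr_z(2), of "2 * a"] a0
    by linarith
  have Lu_lo: "27 / 64 * a \<le> L u"
    using L_triangle[of u "\<lambda>i. - e i", folded z_eq] L_uminus[of e] Lz(1) Le
      mult_left_mono[OF nr_z(1), of "a / 2"] a0 by linarith
  have "(27 / 64 * a)\<^sup>2 \<le> (L u)\<^sup>2" "(L u)\<^sup>2 \<le> (68 / 32 * a)\<^sup>2"
    using power_mono[OF Lu_lo, of 2] power_mono[OF Lu_hi, of 2] a0 L0[of u] by simp_all
  then show "V / 10 \<le> (\<Sum>t\<in>T. (\<Sum>i<N. u i * M t i)\<^sup>2) \<and> (\<Sum>t\<in>T. (\<Sum>i<N. u i * M t i)\<^sup>2) \<le> 6 * V"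
    unfolding L_sq[symmetric] V_a by (simp add: power2_eq_square)
qed

section \<open>Sums of squares of independent Gaussians\<close>

lemma nn_integral_normal_density:
  assumes "0 < \<sigma>"
  shows "(\<integral>\<^sup>+ x. ennreal (normal_density \<mu> \<sigma> x) \<partial>lborel) = 1"
proof -
  interpret prob_space "density lborel (\<lambda>x. ennreal (normal_density \<mu> \<sigma> x))"
    by (rule prob_space_normal_density) (rule assms)
  have "emeasure (density lborel (\<lambda>x. ennreal (normal_density \<mu> \<sigma> x))) UNIV = 1"
    using emeasure_space_1 by simp
  then show ?thesis by (simp add: emeasure_density)
qed

lemma normal_density_times_exp_sq:
  assumes s: "0 < s" and th: "0 < 1 - 2 * th * s\<^sup>2"
  shows "normal_density 0 s y * exp (th * y\<^sup>2)
       = (1 / sqrt (1 - 2 * th * s\<^sup>2)) * normal_density 0 (s / sqrt (1 - 2 * th * s\<^sup>2)) y"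
proof -
  define c where "c = 1 - 2 * th * s\<^sup>2"
  have c0: "0 < c" using th by (simp add: c_def)
  have e: "- y\<^sup>2 / (2 * s\<^sup>2) + th * y\<^sup>2 = - y\<^sup>2 / (2 * (s / sqrt c)\<^sup>2)"
    using s c0 by (simp add: power_divide c_def field_simps)
  have p: "1 / sqrt (2 * pi * s\<^sup>2) = 1 / sqrt c * (1 / sqrt (2 * pi * (s / sqrt c)\<^sup>2))"
    using s c0 by (simp add: power_divide real_sqrt_divide real_sqrt_mult field_simps)
  have "normal_density 0 s y * exp (th * y\<^sup>2) = 1 / sqrt (2 * pi * s\<^sup>2) * exp (- y\<^sup>2 / (2 * s\<^sup>2) + th * y\<^sup>2)"
    unfolding normal_density_def by (simp add: exp_add[symmetric])
  also have "\<dots> = (1 / sqrt c * (1 / sqrt (2 * pi * (s / sqrt c)\<^sup>2))) * exp (- y\<^sup>2 / (2 * (s / sqrt c)\<^sup>2))"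
    by (simp only: e p)
  also have "\<dots> = (1 / sqrt c) * normal_density 0 (s / sqrt c) y"
    unfolding normal_density_def by simp
  finally show ?thesis by (simp add: c_def)
qed

lemma sqrt_2_le_exp_half: "sqrt 2 \<le> exp (1/2 :: real)"
proof -
  have "exp (1/2 :: real) ^ 2 = exp 1" by (simp flip: exp_of_nat_mult)
  then have "2 \<le> exp (1/2 :: real) ^ 2" using exp_ge_add_one_self[of 1] by simp
  then have "sqrt 2 \<le> sqrt (exp (1/2 :: real) ^ 2)" by (rule real_sqrt_le_mono)
  then show ?thesis by simp
qed

lemma inverse_sqrt_3_le_exp: "1 / sqrt 3 \<le> exp (- 1/2 :: real)"
proof -
  have "exp (1/2 :: real) ^ 2 = exp 1" by (simp flip: exp_of_nat_mult)
  then have "exp (1/2 :: real) ^ 2 \<le> 3" using exp_le by simp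
  then have "exp (1/2 :: real) \<le> sqrt 3" by (simp add: real_le_rsqrt)
  then have "1 / sqrt 3 \<le> 1 / exp (1/2 :: real)" by (simp add: frac_le)
  then show ?thesis by (simp add: exp_minus inverse_eq_divide)
qed

locale gaussian_array =
  fixes K :: "(nat \<times> nat) set" and sd :: "nat \<times> nat \<Rightarrow> real"
  assumes finite_K: "finite K" and sd_pos: "\<And>k. k \<in> K \<Longrightarrow> 0 < sd k"
begin

definition "coord_measure k = density lborel (\<lambda>x. ennreal (normal_density 0 (sd k) x))"
definition "P = PiM K coord_measure"

lemma prob_space_coord_measure: "k \<in> K \<Longrightarrow> prob_space (coord_measure k)"
  unfolding coord_measure_def by (rule prob_space_normal_density) (rule sd_pos)

lemma sets_coord_measure[measurable_cong]: "sets (coord_measure k) = sets borel"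
  by (simp add: coord_measure_def)

sublocale prob_space P
  unfolding P_def by (rule prob_space_PiM) (rule prob_space_coord_measure)

lemma measurable_coord[measurable]:
  assumes k: "k \<in> K"
  shows "(\<lambda>\<omega>. \<omega> k) \<in> borel_measurable P"
proof -
  have "(\<lambda>\<omega>. \<omega> k) \<in> measurable P (coord_measure k)"
    unfolding P_def using k by (rule measurable_component_singleton)
  moreover have "measurable P (coord_measure k) = measurable P borel"
    by (rule measurable_cong_sets) (auto simp: sets_coord_measure)
  ultimately show ?thesis by simp
qed

lemma distr_coord:
  assumes k: "k \<in> K" and N: "sets N = sets borel"
  shows "distr P N (\<lambda>\<omega>. \<omega> k) = coord_measure k"
proof -
  have "distr P N (\<lambda>\<omega>. \<omega> k) = distr P (coord_measure k) (\<lambda>\<omega>. \<omega> k)"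
    by (rule distr_cong) (simp_all add: sets_coord_measure N)
  also have "\<dots> = coord_measure k"
    unfolding P_def by (rule distr_PiM_component) (simp_all add: prob_space_coord_measure k)
  finally show ?thesis .
qed

lemma coord_distributed_normal:
  assumes k: "k \<in> K"
  shows "distributed P lborel (\<lambda>\<omega>. \<omega> k) (\<lambda>x. ennreal (normal_density 0 (sd k) x))"
  unfolding distributed_def
proof (intro conjI)
  show "distr P lborel (\<lambda>\<omega>. \<omega> k) = density lborel (\<lambda>x. ennreal (normal_density 0 (sd k) x))"
    using distr_coord[OF k, of lborel] by (simp add: coord_measure_def)
qed (use k in auto)

lemma indep_coords:
  assumes K0: "K \<noteq> {}"
  shows "indep_vars (\<lambda>_. borel) (\<lambda>k \<omega>. \<omega> k) K"
proof -
  define X where "X = (\<lambda>k \<omega>. if k \<in> K then \<omega> k else (0::real))"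
  have rv: "random_variable borel (X k)" for k
    by (cases "k \<in> K") (simp_all add: X_def)
  have sp: "space P = PiE K (\<lambda>k. space (coord_measure k))" by (simp add: P_def space_PiM)
  have "distr P (PiM K (\<lambda>_. borel)) (\<lambda>x. \<lambda>k\<in>K. X k x) = distr P (PiM K (\<lambda>_. borel)) (\<lambda>x. x)"
  proof (rule distr_cong)
    fix x assume "x \<in> space P"
    then show "(\<lambda>k\<in>K. X k x) = x" by (auto simp: sp X_def PiE_def extensional_def fun_eq_iff)
  qed simp_all
  also have "\<dots> = P" by (rule distr_id2) (unfold P_def, rule sets_PiM_cong, simp_all add: sets_coord_measure)
  also have "P = PiM K (\<lambda>k. distr P borel (X k))"
    unfolding P_def
  proof (rule PiM_cong)
    fix k assume k: "k \<in> K"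
    have "distr (PiM K coord_measure) borel (X k) = distr P borel (\<lambda>\<omega>. \<omega> k)"
      by (rule distr_cong) (simp_all add: X_def k P_def)
    then show "coord_measure k = distr (PiM K coord_measure) borel (X k)" using distr_coord[OF k, of borel] by simp
  qed simp
  finally have "indep_vars (\<lambda>_. borel) X K"
    using indep_vars_iff_distr_eq_PiM[OF K0 rv] by (simp add: P_def)
  then show ?thesis by (rule indep_vars_cong[THEN iffD1, rotated 3]) (auto simp: X_def fun_eq_iff)
qed

lemma linear_combination_normal:
  assumes B: "B \<subseteq> K" and K0: "K \<noteq> {}" and v: "0 < (\<Sum>k\<in>B. (a k)\<^sup>2 * (sd k)\<^sup>2)"
  shows "distributed P lborel (\<lambda>\<omega>. \<Sum>k\<in>B. a k * \<omega> k)
           (\<lambda>x. ennreal (normal_density 0 (sqrt (\<Sum>k\<in>B. (a k)\<^sup>2 * (sd k)\<^sup>2)) x))"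
proof -
  \<comment> \<open>\<open>sum_indep_normal\<close> needs positive standard deviations, so drop the zero coefficients\<close>
  define B' where "B' = {k\<in>B. a k \<noteq> 0}"
  have finB: "finite B" using B finite_K by (rule finite_subset)
  have finB': "finite B'" using finB by (simp add: B'_def)
  have B'B: "B' \<subseteq> B" by (auto simp: B'_def)
  have sumB: "(\<Sum>k\<in>B. f k) = (\<Sum>k\<in>B'. f k)" if "\<And>k. k \<in> B \<Longrightarrow> a k = 0 \<Longrightarrow> f k = 0" for f :: "nat \<times> nat \<Rightarrow> real"
    using that finB by (intro sum.mono_neutral_right) (auto simp: B'_def)
  have B'ne: "B' \<noteq> {}"
  proof
    assume "B' = {}"
    then have "(\<Sum>k\<in>B. (a k)\<^sup>2 * (sd k)\<^sup>2) = 0" using sumB[of "\<lambda>k. (a k)\<^sup>2 * (sd k)\<^sup>2"] by simp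
    then show False using v by simp
  qed
  have pos: "0 < \<bar>a k\<bar> * sd k" if "k \<in> B'" for k
  proof -
    have "k \<in> K" "a k \<noteq> 0" using that B by (auto simp: B'_def)
    then show ?thesis using sd_pos by simp
  qed
  have dist: "distributed P lborel (\<lambda>\<omega>. a k * \<omega> k) (\<lambda>x. ennreal (normal_density 0 (\<bar>a k\<bar> * sd k) x))"
    if k: "k \<in> B'" for k
  proof -
    have kK: "k \<in> K" using k B by (auto simp: B'_def)
    have "distributed P lborel (\<lambda>\<omega>. 0 + a k * \<omega> k) (\<lambda>x. ennreal (normal_density (0 + a k * 0) (\<bar>a k\<bar> * sd k) x))"
      by (rule normal_density_affine[OF coord_distributed_normal[OF kK]]) (use k sd_pos[OF kK] in \<open>auto simp: B'_def\<close>)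
    then show ?thesis by simp
  qed
  have ind: "indep_vars (\<lambda>_. borel) (\<lambda>k \<omega>. a k * \<omega> k) B'"
  proof -
    have "indep_vars (\<lambda>_. borel) (\<lambda>k \<omega>. \<omega> k) B'"
      using indep_coords[OF K0] B'B B by (rule indep_vars_subset[OF _ order_trans])
    then have "indep_vars (\<lambda>_. borel) (\<lambda>k x. (\<lambda>y. a k * y) ((\<lambda>\<omega>. \<omega> k) x)) B'"
      by (rule indep_vars_compose2) simp
    then show ?thesis by simp
  qed
  have "distributed P lborel (\<lambda>\<omega>. \<Sum>k\<in>B'. a k * \<omega> k)
      (\<lambda>x. ennreal (normal_density (\<Sum>k\<in>B'. 0) (sqrt (\<Sum>k\<in>B'. (\<bar>a k\<bar> * sd k)\<^sup>2)) x))"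
    by (rule sum_indep_normal[OF finB' B'ne ind pos dist])
  moreover have "(\<lambda>\<omega>. \<Sum>k\<in>B'. a k * \<omega> k) = (\<lambda>\<omega>. \<Sum>k\<in>B. a k * \<omega> k)"
    by (rule ext, rule sumB[symmetric]) simp
  moreover have "(\<Sum>k\<in>B'. (\<bar>a k\<bar> * sd k)\<^sup>2) = (\<Sum>k\<in>B. (a k)\<^sup>2 * (sd k)\<^sup>2)"
    by (subst sumB[of "\<lambda>k. (a k)\<^sup>2 * (sd k)\<^sup>2"]) (auto simp: power_mult_distrib)
  ultimately show ?thesis by simp
qed

lemma indep_linear_combinations:
  assumes K0: "K \<noteq> {}" and BK: "\<And>t. t \<in> T \<Longrightarrow> B t \<subseteq> K" and dj: "disjoint_family_on B T"
  shows "indep_vars (\<lambda>_. borel) (\<lambda>t \<omega>. \<Sum>k\<in>B t. a k * \<omega> k) T"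
proof -
  have "indep_vars (\<lambda>t. PiM (B t) (\<lambda>_. borel)) (\<lambda>t \<omega>. restrict (\<lambda>k. \<omega> k) (B t)) T"
    by (rule indep_vars_restrict[OF indep_coords[OF K0] BK dj])
  then have "indep_vars (\<lambda>_. borel) (\<lambda>t x. (\<lambda>f. \<Sum>k\<in>B t. a k * f k) (restrict (\<lambda>k. x k) (B t))) T"
  proof (rule indep_vars_compose2)
    fix t assume "t \<in> T"
    show "(\<lambda>f. \<Sum>k\<in>B t. a k * f k) \<in> borel_measurable (PiM (B t) (\<lambda>_. borel))"
    proof (intro borel_measurable_sum borel_measurable_times borel_measurable_const)
      fix k assume "k \<in> B t"
      then show "(\<lambda>x. x k) \<in> borel_measurable (PiM (B t) (\<lambda>_. borel))"
        by (rule measurable_component_singleton)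
    qed
  qed
  moreover have "(\<lambda>f. \<Sum>k\<in>B t. a k * f k) (restrict (\<lambda>k. x k) (B t)) = (\<Sum>k\<in>B t. a k * x k)" for t x
    by (simp add: restrict_def)
  ultimately show ?thesis by simp
qed

lemma nn_integral_exp_sq_normal:
  assumes dist: "distributed P lborel Y (\<lambda>x. ennreal (normal_density 0 sg x))"
    and sg: "0 < sg" and th: "0 < 1 - 2 * th * sg\<^sup>2"
  shows "(\<integral>\<^sup>+\<omega>. ennreal (exp (th * (Y \<omega>)\<^sup>2)) \<partial>P) = ennreal (1 / sqrt (1 - 2 * th * sg\<^sup>2))"
proof -
  define c where "c = 1 / sqrt (1 - 2 * th * sg\<^sup>2)"
  have c0: "0 \<le> c" using th by (simp add: c_def)
  have Ym: "Y \<in> measurable P lborel" and D: "distr P lborel Y = density lborel (\<lambda>x. ennreal (normal_density 0 sg x))"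
    using dist by (auto simp: distributed_def)
  have "(\<integral>\<^sup>+\<omega>. ennreal (exp (th * (Y \<omega>)\<^sup>2)) \<partial>P) = (\<integral>\<^sup>+y. ennreal (exp (th * y\<^sup>2)) \<partial>distr P lborel Y)"
    by (rule nn_integral_distr[symmetric]) (use Ym in simp_all)
  also have "\<dots> = (\<integral>\<^sup>+y. ennreal (normal_density 0 sg y) * ennreal (exp (th * y\<^sup>2)) \<partial>lborel)"
    unfolding D by (rule nn_integral_density) simp_all
  also have "\<dots> = (\<integral>\<^sup>+y. ennreal c * ennreal (normal_density 0 (sg / sqrt (1 - 2 * th * sg\<^sup>2)) y) \<partial>lborel)"
  proof (rule nn_integral_cong)
    fix y :: real
    have "ennreal (normal_density 0 sg y) * ennreal (exp (th * y\<^sup>2)) = ennreal (normal_density 0 sg y * exp (th * y\<^sup>2))"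
      by (rule ennreal_mult[symmetric]) auto
    also have "\<dots> = ennreal (c * normal_density 0 (sg / sqrt (1 - 2 * th * sg\<^sup>2)) y)"
      using normal_density_times_exp_sq[OF sg th] by (simp add: c_def)
    also have "\<dots> = ennreal c * ennreal (normal_density 0 (sg / sqrt (1 - 2 * th * sg\<^sup>2)) y)"
      by (rule ennreal_mult) (use c0 in auto)
    finally show "ennreal (normal_density 0 sg y) * ennreal (exp (th * y\<^sup>2)) = \<dots>" .
  qed
  also have "\<dots> = ennreal c * (\<integral>\<^sup>+y. ennreal (normal_density 0 (sg / sqrt (1 - 2 * th * sg\<^sup>2)) y) \<partial>lborel)"
    by (rule nn_integral_cmult) simp
  also have "\<dots> = ennreal c" using sg th by (simp add: nn_integral_normal_density)
  finally show ?thesis by (simp add: c_def)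
qed

lemma nn_integral_prod_exp_sq:
  assumes K0: "K \<noteq> {}" and finT: "finite T" and BK: "\<And>t. t \<in> T \<Longrightarrow> B t \<subseteq> K"
    and dj: "disjoint_family_on B T"
    and v: "\<And>t. t \<in> T \<Longrightarrow> (\<Sum>k\<in>B t. (a k)\<^sup>2 * (sd k)\<^sup>2) = v" and v0: "0 < v"
    and th: "0 < 1 - 2 * th * v"
  shows "(\<integral>\<^sup>+\<omega>. (\<Prod>t\<in>T. ennreal (exp (th * (\<Sum>k\<in>B t. a k * \<omega> k)\<^sup>2))) \<partial>P)
           = ennreal ((1 / sqrt (1 - 2 * th * v)) ^ card T)"
proof -
  define Y where "Y = (\<lambda>t \<omega>. \<Sum>k\<in>B t. a k * \<omega> k)"
  have dist: "distributed P lborel (Y t) (\<lambda>x. ennreal (normal_density 0 (sqrt v) x))" if "t \<in> T" for t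
    using linear_combination_normal[OF BK[OF that] K0, of a] v[OF that] v0 by (simp add: Y_def)
  have "indep_vars (\<lambda>_. borel) Y T" unfolding Y_def by (rule indep_linear_combinations[OF K0 BK dj])
  then have "indep_vars (\<lambda>_. borel) (\<lambda>t x. (\<lambda>y. ennreal (exp (th * y\<^sup>2))) (Y t x)) T"
    by (rule indep_vars_compose2) simp
  then have "(\<integral>\<^sup>+\<omega>. (\<Prod>t\<in>T. ennreal (exp (th * (Y t \<omega>)\<^sup>2))) \<partial>P)
      = (\<Prod>t\<in>T. \<integral>\<^sup>+\<omega>. ennreal (exp (th * (Y t \<omega>)\<^sup>2)) \<partial>P)"
    by (intro indep_vars_nn_integral[OF finT]) simp_all
  also have "\<dots> = (\<Prod>t\<in>T. ennreal (1 / sqrt (1 - 2 * th * v)))"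
    using nn_integral_exp_sq_normal[OF dist, of _ th] v0 th by (intro prod.cong) simp_all
  also have "\<dots> = ennreal ((1 / sqrt (1 - 2 * th * v)) ^ card T)"
    using th by (simp add: ennreal_power[symmetric])
  finally show ?thesis unfolding Y_def .
qed

lemma chernoff_sum_sq:
  assumes K0: "K \<noteq> {}" and finT: "finite T" and BK: "\<And>t. t \<in> T \<Longrightarrow> B t \<subseteq> K"
    and dj: "disjoint_family_on B T"
    and v: "\<And>t. t \<in> T \<Longrightarrow> (\<Sum>k\<in>B t. (a k)\<^sup>2 * (sd k)\<^sup>2) = v" and v0: "0 < v"
    and th: "0 < 1 - 2 * th * v"
  shows "measure P {\<omega>\<in>space P. th * c \<le> th * (\<Sum>t\<in>T. (\<Sum>k\<in>B t. a k * \<omega> k)\<^sup>2)}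
          \<le> exp (- th * c) * (1 / sqrt (1 - 2 * th * v)) ^ card T"
proof -
  define Y where "Y = (\<lambda>t \<omega>. \<Sum>k\<in>B t. a k * \<omega> k)"
  define S where "S = (\<lambda>\<omega>. \<Sum>t\<in>T. (Y t \<omega>)\<^sup>2)"
  define A where "A = {\<omega>\<in>space P. th * c \<le> th * S \<omega>}"
  have Ym: "Y t \<in> borel_measurable P" if "t \<in> T" for t
    unfolding Y_def
  proof (intro borel_measurable_sum borel_measurable_times borel_measurable_const)
    fix k assume "k \<in> B t"
    then show "(\<lambda>\<omega>. \<omega> k) \<in> borel_measurable P" using BK[OF that] by (intro measurable_coord) auto
  qed
  have Sm[measurable]: "S \<in> borel_measurable P" unfolding S_def using Ym
    by (intro borel_measurable_sum borel_measurable_power) auto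
  have A: "A \<in> sets P" unfolding A_def by measurable
  \<comment> \<open>Markov's inequality for \<open>exp (th * S)\<close>\<close>
  have "emeasure P A = (\<integral>\<^sup>+\<omega>. indicator A \<omega> \<partial>P)" using A by simp
  also have "\<dots> \<le> (\<integral>\<^sup>+\<omega>. ennreal (exp (- th * c)) * (\<Prod>t\<in>T. ennreal (exp (th * (Y t \<omega>)\<^sup>2))) \<partial>P)"
  proof (rule nn_integral_mono)
    fix \<omega> assume "\<omega> \<in> space P"
    have "(\<Prod>t\<in>T. ennreal (exp (th * (Y t \<omega>)\<^sup>2))) = ennreal (\<Prod>t\<in>T. exp (th * (Y t \<omega>)\<^sup>2))"
      by (rule prod_ennreal) simp
    also have "(\<Prod>t\<in>T. exp (th * (Y t \<omega>)\<^sup>2)) = exp (th * S \<omega>)"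
      using finT by (simp add: S_def exp_sum sum_distrib_left)
    finally have pe: "ennreal (exp (- th * c)) * (\<Prod>t\<in>T. ennreal (exp (th * (Y t \<omega>)\<^sup>2))) = ennreal (exp (th * S \<omega> - th * c))"
      by (simp add: ennreal_mult[symmetric] exp_add[symmetric])
    show "indicator A \<omega> \<le> ennreal (exp (- th * c)) * (\<Prod>t\<in>T. ennreal (exp (th * (Y t \<omega>)\<^sup>2)))"
      unfolding pe by (auto simp: indicator_def A_def)
  qed
  also have "\<dots> = ennreal (exp (- th * c)) * (\<integral>\<^sup>+\<omega>. (\<Prod>t\<in>T. ennreal (exp (th * (Y t \<omega>)\<^sup>2))) \<partial>P)"
    by (rule nn_integral_cmult) (use Ym in \<open>auto intro!: borel_measurable_prod_ennreal\<close>)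
  also have "\<dots> = ennreal (exp (- th * c)) * ennreal ((1 / sqrt (1 - 2 * th * v)) ^ card T)"
    unfolding Y_def by (simp only: nn_integral_prod_exp_sq[OF K0 finT BK dj v v0 th])
  also have "\<dots> = ennreal (exp (- th * c) * (1 / sqrt (1 - 2 * th * v)) ^ card T)"
    by (rule ennreal_mult[symmetric]) (use th in auto)
  finally have "emeasure P A \<le> ennreal (exp (- th * c) * (1 / sqrt (1 - 2 * th * v)) ^ card T)" .
  then show ?thesis
    unfolding emeasure_eq_measure A_def S_def Y_def
    by (subst (asm) ennreal_le_iff) (use th in auto)
qed

lemma sum_sq_upper_tail:
  assumes K0: "K \<noteq> {}" and finT: "finite T" and BK: "\<And>t. t \<in> T \<Longrightarrow> B t \<subseteq> K"
    and dj: "disjoint_family_on B T"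
    and v: "\<And>t. t \<in> T \<Longrightarrow> (\<Sum>k\<in>B t. (a k)\<^sup>2 * (sd k)\<^sup>2) = v" and v0: "0 < v"
  shows "measure P {\<omega>\<in>space P. 4 * v * card T \<le> (\<Sum>t\<in>T. (\<Sum>k\<in>B t. a k * \<omega> k)\<^sup>2)}
          \<le> exp (- real (card T) / 2)"
proof -
  define th where "th = 1 / (4 * v)"
  have th0: "0 < th" using v0 by (simp add: th_def)
  have th1: "1 - 2 * th * v = 1 / 2" using v0 by (simp add: th_def field_simps)
  have set_eq: "{\<omega>\<in>space P. 4 * v * card T \<le> (\<Sum>t\<in>T. (\<Sum>k\<in>B t. a k * \<omega> k)\<^sup>2)}
      = {\<omega>\<in>space P. th * (4 * v * card T) \<le> th * (\<Sum>t\<in>T. (\<Sum>k\<in>B t. a k * \<omega> k)\<^sup>2)}"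
    using th0 by (auto simp: mult_le_cancel_left_pos)
  have "measure P {\<omega>\<in>space P. 4 * v * card T \<le> (\<Sum>t\<in>T. (\<Sum>k\<in>B t. a k * \<omega> k)\<^sup>2)}
      \<le> exp (- th * (4 * v * card T)) * (1 / sqrt (1 - 2 * th * v)) ^ card T"
  proof -
    have "0 < 1 - 2 * th * v" using th1 by simp
    from chernoff_sum_sq[OF K0 finT BK dj v v0 this, of "4 * v * real (card T)"] show ?thesis unfolding set_eq .
  qed
  also have "\<dots> = exp (- real (card T)) * sqrt 2 ^ card T"
    using v0 by (simp add: th1 th_def real_sqrt_divide)
  also have "\<dots> \<le> exp (- real (card T)) * exp (1/2) ^ card T"
    by (intro mult_left_mono power_mono sqrt_2_le_exp_half) auto
  also have "\<dots> = exp (- real (card T) / 2)"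
    by (simp flip: exp_of_nat_mult exp_add)
  finally show ?thesis .
qed

lemma sum_sq_lower_tail:
  assumes K0: "K \<noteq> {}" and finT: "finite T" and BK: "\<And>t. t \<in> T \<Longrightarrow> B t \<subseteq> K"
    and dj: "disjoint_family_on B T"
    and v: "\<And>t. t \<in> T \<Longrightarrow> (\<Sum>k\<in>B t. (a k)\<^sup>2 * (sd k)\<^sup>2) = v" and v0: "0 < v"
  shows "measure P {\<omega>\<in>space P. (\<Sum>t\<in>T. (\<Sum>k\<in>B t. a k * \<omega> k)\<^sup>2) \<le> v * card T / 4}
          \<le> exp (- real (card T) / 4)"
proof -
  define th where "th = - 1 / v"
  have th0: "th < 0" using v0 by (simp add: th_def)
  have th1: "1 - 2 * th * v = 3" using v0 by (simp add: th_def field_simps)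
  have set_eq: "{\<omega>\<in>space P. (\<Sum>t\<in>T. (\<Sum>k\<in>B t. a k * \<omega> k)\<^sup>2) \<le> v * card T / 4}
      = {\<omega>\<in>space P. th * (v * card T / 4) \<le> th * (\<Sum>t\<in>T. (\<Sum>k\<in>B t. a k * \<omega> k)\<^sup>2)}"
    using th0 by (auto simp: mult_le_cancel_left)
  have "measure P {\<omega>\<in>space P. (\<Sum>t\<in>T. (\<Sum>k\<in>B t. a k * \<omega> k)\<^sup>2) \<le> v * card T / 4}
      \<le> exp (- th * (v * card T / 4)) * (1 / sqrt (1 - 2 * th * v)) ^ card T"
  proof -
    have "0 < 1 - 2 * th * v" using th1 by simp
    from chernoff_sum_sq[OF K0 finT BK dj v v0 this, of "v * real (card T) / 4"] show ?thesis unfolding set_eq .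
  qed
  also have "\<dots> = exp (real (card T) / 4) * (1 / sqrt 3) ^ card T"
    using v0 by (simp add: th1 th_def)
  also have "\<dots> \<le> exp (real (card T) / 4) * exp (- 1/2) ^ card T"
    by (intro mult_left_mono power_mono inverse_sqrt_3_le_exp) auto
  also have "\<dots> = exp (- real (card T) / 4)"
    by (simp flip: exp_of_nat_mult exp_add)
  finally show ?thesis .
qed

end

text \<open>\<open>pos t i\<close> is the position in the array of entry \<open>i\<close> of block \<open>t\<close>; \<open>ci\<close> recovers \<open>i\<close> from it.\<close>

locale gaussian_blocks = gaussian_array +
  fixes T :: "nat set" and N :: nat and pos :: "nat \<Rightarrow> nat \<Rightarrow> nat \<times> nat"
    and ci :: "nat \<times> nat \<Rightarrow> nat" and sz :: real
  assumes finite_T: "finite T" and T_ne: "T \<noteq> {}" and N_pos: "0 < N" and sz_pos: "0 < sz"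
    and pos_in_K: "\<And>t i. t \<in> T \<Longrightarrow> i < N \<Longrightarrow> pos t i \<in> K"
    and pos_inj: "\<And>t i t' i'. t \<in> T \<Longrightarrow> i < N \<Longrightarrow> t' \<in> T \<Longrightarrow> i' < N \<Longrightarrow>
        pos t i = pos t' i' \<Longrightarrow> t = t' \<and> i = i'"
    and ci_pos: "\<And>t i. t \<in> T \<Longrightarrow> i < N \<Longrightarrow> ci (pos t i) = i"
    and sd_pos_eq: "\<And>t i. t \<in> T \<Longrightarrow> i < N \<Longrightarrow> sd (pos t i) = sz"
begin

lemma K_ne: "K \<noteq> {}"
  using pos_in_K T_ne N_pos by blast

lemma measurable_block_form[measurable]:
  "(\<lambda>\<omega>. \<Sum>t\<in>T. (\<Sum>i<N. u i * \<omega> (pos t i))\<^sup>2) \<in> borel_measurable P"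
  using measurable_coord[OF pos_in_K]
  by (intro borel_measurable_sum borel_measurable_power borel_measurable_times borel_measurable_const) auto

lemma measurable_block_frobenius[measurable]:
  "(\<lambda>\<omega>. \<Sum>t\<in>T. \<Sum>i<N. (\<omega> (pos t i))\<^sup>2) \<in> borel_measurable P"
  using measurable_coord[OF pos_in_K] by (intro borel_measurable_sum borel_measurable_power) auto

lemma block_form_deviation_prob:
  assumes z: "0 < (\<Sum>i<N. (z i)\<^sup>2)"
  defines "V \<equiv> sz\<^sup>2 * real (card T)"
  shows "measure P {\<omega>\<in>space P. (\<Sum>t\<in>T. (\<Sum>i<N. z i * \<omega> (pos t i))\<^sup>2) \<le> V / 4 * (\<Sum>i<N. (z i)\<^sup>2)}
         \<le> exp (- real (card T) / 4)"
    and "measure P {\<omega>\<in>space P. 4 * V * (\<Sum>i<N. (z i)\<^sup>2) \<le> (\<Sum>t\<in>T. (\<Sum>i<N. z i * \<omega> (pos t i))\<^sup>2)}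
         \<le> exp (- real (card T) / 4)"
proof -
  define Q where "Q = (\<lambda>\<omega>. \<Sum>t\<in>T. (\<Sum>i<N. z i * \<omega> (pos t i))\<^sup>2)"
  define nz where "nz = (\<Sum>i<N. (z i)\<^sup>2)"
  define B where "B = (\<lambda>t. pos t ` {..<N})"
  have BK: "B t \<subseteq> K" if "t \<in> T" for t using pos_in_K that by (auto simp: B_def)
  have dj: "disjoint_family_on B T"
    unfolding disjoint_family_on_def B_def using pos_inj by blast
  have reindex: "(\<Sum>k\<in>B t. f k) = (\<Sum>i<N. f (pos t i))" if "t \<in> T" for t f
  proof -
    have "inj_on (pos t) {..<N}" using pos_inj[OF that _ that] by (auto simp: inj_on_def)
    then show ?thesis unfolding B_def by (rule sum.reindex[unfolded comp_def])
  qed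
  have Q_blocks: "Q \<omega> = (\<Sum>t\<in>T. (\<Sum>k\<in>B t. z (ci k) * \<omega> k)\<^sup>2)" for \<omega>
    unfolding Q_def by (intro sum.cong refl) (simp add: reindex ci_pos)
  have var: "(\<Sum>k\<in>B t. (z (ci k))\<^sup>2 * (sd k)\<^sup>2) = sz\<^sup>2 * nz" if "t \<in> T" for t
    using that by (simp add: reindex ci_pos sd_pos_eq nz_def sum_distrib_left mult.commute)
  have var_pos: "0 < sz\<^sup>2 * nz" using sz_pos z by (simp add: nz_def)
  have "measure P {\<omega>\<in>space P. Q \<omega> \<le> V / 4 * nz} \<le> exp (- real (card T) / 4)"
  proof -
    have "{\<omega>\<in>space P. Q \<omega> \<le> V / 4 * nz}
        = {\<omega>\<in>space P. (\<Sum>t\<in>T. (\<Sum>k\<in>B t. z (ci k) * \<omega> k)\<^sup>2) \<le> (sz\<^sup>2 * nz) * card T / 4}"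
      by (auto simp: Q_blocks V_def mult_ac)
    also have "measure P \<dots> \<le> exp (- real (card T) / 4)"
      by (rule sum_sq_lower_tail[OF K_ne finite_T BK dj var var_pos])
    finally show ?thesis .
  qed
  then show "measure P {\<omega>\<in>space P. (\<Sum>t\<in>T. (\<Sum>i<N. z i * \<omega> (pos t i))\<^sup>2) \<le> V / 4 * (\<Sum>i<N. (z i)\<^sup>2)}
      \<le> exp (- real (card T) / 4)" by (simp only: Q_def nz_def)
  have "measure P {\<omega>\<in>space P. 4 * V * nz \<le> Q \<omega>} \<le> exp (- real (card T) / 4)"
  proof -
    have "{\<omega>\<in>space P. 4 * V * nz \<le> Q \<omega>}
        = {\<omega>\<in>space P. 4 * (sz\<^sup>2 * nz) * card T \<le> (\<Sum>t\<in>T. (\<Sum>k\<in>B t. z (ci k) * \<omega> k)\<^sup>2)}"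
      by (auto simp: Q_blocks V_def algebra_simps)
    also have "measure P \<dots> \<le> exp (- real (card T) / 2)"
      by (rule sum_sq_upper_tail[OF K_ne finite_T BK dj var var_pos])
    also have "\<dots> \<le> exp (- real (card T) / 4)" by simp
    finally show ?thesis .
  qed
  then show "measure P {\<omega>\<in>space P. 4 * V * (\<Sum>i<N. (z i)\<^sup>2) \<le> (\<Sum>t\<in>T. (\<Sum>i<N. z i * \<omega> (pos t i))\<^sup>2)}
      \<le> exp (- real (card T) / 4)" by (simp only: Q_def nz_def)
qed

lemma block_frobenius_prob:
  "measure P {\<omega>\<in>space P. 4 * (sz\<^sup>2 * real (card T)) * real N \<le> (\<Sum>t\<in>T. \<Sum>i<N. (\<omega> (pos t i))\<^sup>2)}
     \<le> exp (- real (N * card T) / 2)"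
proof -
  \<comment> \<open>every entry is a block of its own\<close>
  define TT where "TT = T \<times> {..<N}"
  define B1 where "B1 = (\<lambda>(t, i). {pos t i})"
  have finTT: "finite TT" using finite_T by (simp add: TT_def)
  have BK1: "B1 ti \<subseteq> K" if "ti \<in> TT" for ti using that pos_in_K by (auto simp: TT_def B1_def)
  have dj1: "disjoint_family_on B1 TT"
    unfolding disjoint_family_on_def TT_def B1_def using pos_inj by fastforce
  have var1: "(\<Sum>k\<in>B1 ti. ((\<lambda>_. 1::real) k)\<^sup>2 * (sd k)\<^sup>2) = sz\<^sup>2" if "ti \<in> TT" for ti
    using that sd_pos_eq by (auto simp: TT_def B1_def)
  have card_TT: "card TT = card T * N" by (simp add: TT_def card_cartesian_product)
  have "(\<Sum>ti\<in>TT. (\<Sum>k\<in>B1 ti. 1 * \<omega> k)\<^sup>2) = (\<Sum>t\<in>T. \<Sum>i<N. (\<omega> (pos t i))\<^sup>2)" for \<omega> :: "nat \<times> nat \<Rightarrow> real"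
    by (simp add: TT_def B1_def sum.cartesian_product split_beta)
  then have "{\<omega>\<in>space P. 4 * (sz\<^sup>2 * real (card T)) * real N \<le> (\<Sum>t\<in>T. \<Sum>i<N. (\<omega> (pos t i))\<^sup>2)}
      = {\<omega>\<in>space P. 4 * sz\<^sup>2 * card TT \<le> (\<Sum>ti\<in>TT. (\<Sum>k\<in>B1 ti. 1 * \<omega> k)\<^sup>2)}"
    by (simp add: card_TT algebra_simps)
  also have "measure P \<dots> \<le> exp (- real (card TT) / 2)"
    by (rule sum_sq_upper_tail[OF K_ne finTT BK1 dj1 var1]) (use sz_pos in auto)
  finally show ?thesis by (simp add: card_TT mult.commute)
qed

lemma block_form_concentration:
  defines "V \<equiv> sz\<^sup>2 * real (card T)"
  shows "\<exists>Bad\<in>sets P.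
      measure P Bad \<le> real ((32 * N + 1) ^ N) * (2 * exp (- real (card T) / 4)) + exp (- real (N * card T) / 2) \<and>
      (\<forall>\<omega>\<in>space P - Bad. \<forall>u.
         V / 10 * (\<Sum>i<N. (u i)\<^sup>2) \<le> (\<Sum>t\<in>T. (\<Sum>i<N. u i * \<omega> (pos t i))\<^sup>2) \<and>
         (\<Sum>t\<in>T. (\<Sum>i<N. u i * \<omega> (pos t i))\<^sup>2) \<le> 6 * V * (\<Sum>i<N. (u i)\<^sup>2))"
proof -
  define Q where "Q = (\<lambda>(u::nat \<Rightarrow> real) (\<omega>::nat \<times> nat \<Rightarrow> real). \<Sum>t\<in>T. (\<Sum>i<N. u i * \<omega> (pos t i))\<^sup>2)"
  define nz where "nz = (\<lambda>u::nat \<Rightarrow> real. \<Sum>i<N. (u i)\<^sup>2)"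
  define lo where "lo = (\<lambda>k. {\<omega>\<in>space P. Q (grid_vec N k) \<omega> \<le> V / 4 * nz (grid_vec N k)})"
  define hi where "hi = (\<lambda>k. {\<omega>\<in>space P. 4 * V * nz (grid_vec N k) \<le> Q (grid_vec N k) \<omega>})"
  define Dev where "Dev = (\<lambda>k. if 0 < nz (grid_vec N k) then lo k \<union> hi k else {})"
  define Fr where "Fr = {\<omega>\<in>space P. 4 * V * real N \<le> (\<Sum>t\<in>T. \<Sum>i<N. (\<omega> (pos t i))\<^sup>2)}"
  have Q_measurable[measurable]: "Q u \<in> borel_measurable P" for u
    unfolding Q_def by (rule measurable_block_form)
  have lo_sets: "lo k \<in> sets P" and hi_sets: "hi k \<in> sets P" for k
    unfolding lo_def hi_def by measurable
  have Dev_sets: "Dev k \<in> sets P" for k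
    using lo_sets hi_sets by (simp add: Dev_def)
  have Fr_sets: "Fr \<in> sets P" unfolding Fr_def by measurable
  have Dev_prob: "measure P (Dev k) \<le> 2 * exp (- real (card T) / 4)" for k
  proof (cases "0 < nz (grid_vec N k)")
    case True
    then have "measure P (Dev k) \<le> measure P (lo k) + measure P (hi k)"
      using measure_Un_le[OF lo_sets hi_sets] by (simp add: Dev_def)
    moreover have "measure P (lo k) \<le> exp (- real (card T) / 4)"
      unfolding lo_def Q_def nz_def V_def by (rule block_form_deviation_prob(1)[OF True[unfolded nz_def]])
    moreover have "measure P (hi k) \<le> exp (- real (card T) / 4)"
      unfolding hi_def Q_def nz_def V_def by (rule block_form_deviation_prob(2)[OF True[unfolded nz_def]])
    ultimately show ?thesis by linarith
  qed (simp add: Dev_def)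
  define Bad where "Bad = (\<Union>k\<in>grid N. Dev k) \<union> Fr"
  have "measure P Bad \<le> measure P (\<Union>k\<in>grid N. Dev k) + measure P Fr"
    unfolding Bad_def using Dev_sets Fr_sets finite_grid by (intro measure_Un_le sets.finite_UN) auto
  also have "measure P (\<Union>k\<in>grid N. Dev k) \<le> (\<Sum>k\<in>grid N. measure P (Dev k))"
    using Dev_sets by (intro measure_UNION_le[OF finite_grid])
  also have "(\<Sum>k\<in>grid N. measure P (Dev k)) + measure P Fr
      \<le> (\<Sum>k\<in>grid N. 2 * exp (- real (card T) / 4)) + exp (- real (N * card T) / 2)"
    using Dev_prob block_frobenius_prob by (intro add_mono sum_mono) (simp_all add: Fr_def V_def)
  finally have Bad_prob: "measure P Bad \<le> real ((32 * N + 1) ^ N) * (2 * exp (- real (card T) / 4))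
      + exp (- real (N * card T) / 2)" by (simp add: card_grid)
  have "0 < V" using sz_pos T_ne finite_T by (simp add: V_def card_gt_0_iff)
  then have bounds: "V / 10 * nz u \<le> Q u \<omega> \<and> Q u \<omega> \<le> 6 * V * nz u"
    if \<omega>: "\<omega> \<in> space P - Bad" for \<omega> u
    unfolding Q_def nz_def
  proof (rule quadratic_form_bounds_of_grid[where M="\<lambda>t i. \<omega> (pos t i)", OF N_pos])
    fix k assume k: "k \<in> grid N" and nz_pos: "0 < (\<Sum>i<N. (grid_vec N k i)\<^sup>2)"
    have "\<omega> \<notin> Dev k" using \<omega> k by (auto simp: Bad_def)
    moreover have "0 < nz (grid_vec N k)" using nz_pos by (simp add: nz_def)
    ultimately have "V / 4 * nz (grid_vec N k) < Q (grid_vec N k) \<omega>"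
        "Q (grid_vec N k) \<omega> < 4 * V * nz (grid_vec N k)"
      using \<omega> unfolding Dev_def lo_def hi_def by auto
    then show "V / 4 * (\<Sum>i<N. (grid_vec N k i)\<^sup>2) \<le> (\<Sum>t\<in>T. (\<Sum>i<N. grid_vec N k i * \<omega> (pos t i))\<^sup>2) \<and>
        (\<Sum>t\<in>T. (\<Sum>i<N. grid_vec N k i * \<omega> (pos t i))\<^sup>2) \<le> 4 * V * (\<Sum>i<N. (grid_vec N k i)\<^sup>2)"
      unfolding Q_def nz_def by simp
  next
    show "(\<Sum>t\<in>T. \<Sum>i<N. (\<omega> (pos t i))\<^sup>2) \<le> 4 * V * real N" using \<omega> by (auto simp: Bad_def Fr_def)
  qed
  have "Bad \<in> sets P"
    unfolding Bad_def using Dev_sets Fr_sets finite_grid by (intro sets.Un sets.finite_UN) auto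
  with Bad_prob bounds show ?thesis unfolding Q_def nz_def by blast
qed

end

section \<open>Measurability of the survival\<close>

lemma gram_form_variational:
  fixes Phi :: "nat \<Rightarrow> nat \<Rightarrow> real"
  assumes u: "\<forall>i<n. (\<Sum>j<d. Phi i j * (\<Sum>m<n. u m * Phi m j)) = x i"
  shows "2 * (\<Sum>i<n. y i * x i) - (\<Sum>l<d. (\<Sum>i<n. y i * Phi i l)\<^sup>2)
       = (\<Sum>i<n. u i * x i) - (\<Sum>l<d. (\<Sum>i<n. (y i - u i) * Phi i l)\<^sup>2)"
proof -
  define w where "w = (\<lambda>y l. \<Sum>i<n. y i * Phi i l)"
  have bil: "(\<Sum>i<n. y i * x i) = (\<Sum>l<d. w y l * w u l)" for y
    unfolding w_def by (rule gram_bilinear[OF u])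
  have "w (\<lambda>i. y i - u i) l = w y l - w u l" for l
    by (simp add: w_def algebra_simps sum_subtractf)
  then have "(\<Sum>l<d. (\<Sum>i<n. (y i - u i) * Phi i l)\<^sup>2) = (\<Sum>l<d. (w y l - w u l)\<^sup>2)"
    by (simp add: w_def)
  moreover have "2 * (\<Sum>i<n. y i * x i) - (\<Sum>l<d. (w y l)\<^sup>2)
      = (\<Sum>l<d. (w u l)\<^sup>2) - (\<Sum>l<d. (w y l - w u l)\<^sup>2)"
    unfolding bil by (simp add: power2_eq_square algebra_simps sum_subtractf sum.distrib sum_distrib_left)
  moreover have "(\<Sum>l<d. (w u l)\<^sup>2) = (\<Sum>i<n. u i * x i)"
    using bil[of u] by (simp add: power2_eq_square)
  ultimately show ?thesis by (simp add: w_def)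
qed

lemma gram_form_eq_SUP_rat:
  fixes Phi :: "nat \<Rightarrow> nat \<Rightarrow> real"
  assumes u: "\<forall>i<n. (\<Sum>j<d. Phi i j * (\<Sum>m<n. u m * Phi m j)) = x i"
  shows "(SUP y\<in>PiE {..<n} (\<lambda>_. \<rat>). 2 * (\<Sum>i<n. y i * x i) - (\<Sum>l<d. (\<Sum>i<n. y i * Phi i l)\<^sup>2))
       = (\<Sum>i<n. u i * x i)"
proof -
  let ?G = "\<lambda>y. 2 * (\<Sum>i<n. y i * x i) - (\<Sum>l<d. (\<Sum>i<n. y i * Phi i l)\<^sup>2)"
  let ?S = "\<Sum>i<n. u i * x i"
  let ?Q = "PiE {..<n} (\<lambda>_. \<rat>) :: (nat \<Rightarrow> real) set"
  note G = gram_form_variational[OF u]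
  have le: "?G y \<le> ?S" for y unfolding G by (simp add: sum_nonneg)
  have ne: "?Q \<noteq> {}"
    by (simp add: PiE_eq_empty_iff) (use Rats_0 in blast)
  have bdd: "bdd_above (?G ` ?Q)" using le by (intro bdd_aboveI[where M="?S"]) auto
  have "(SUP y\<in>?Q. ?G y) \<le> ?S" using ne le by (intro cSUP_least) auto
  moreover have "?S \<le> (SUP y\<in>?Q. ?G y)"
  proof (rule field_le_epsilon)
    fix e :: real assume e: "0 < e"
    define C where "C = (\<Sum>l<d. (\<Sum>i<n. \<bar>Phi i l\<bar>)\<^sup>2)"
    have C0: "0 \<le> C" by (simp add: C_def sum_nonneg)
    define eta where "eta = sqrt (e / (C + 1))"
    have eta0: "0 < eta" using e C0 by (simp add: eta_def)
    have "\<exists>r\<in>\<rat>. u i < r \<and> r < u i + eta" for i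
      using Rats_dense_in_real[of "u i" "u i + eta"] eta0 by auto
    then obtain f where f: "\<And>i. f i \<in> \<rat> \<and> u i < f i \<and> f i < u i + eta" by metis
    define y where "y = restrict f {..<n}"
    have yQ: "y \<in> ?Q" using f by (auto simp: y_def)
    have "(\<Sum>l<d. (\<Sum>i<n. (y i - u i) * Phi i l)\<^sup>2) \<le> (\<Sum>l<d. (eta * (\<Sum>i<n. \<bar>Phi i l\<bar>))\<^sup>2)"
    proof (rule sum_mono)
      fix l
      have "\<bar>\<Sum>i<n. (y i - u i) * Phi i l\<bar> \<le> (\<Sum>i<n. \<bar>(y i - u i) * Phi i l\<bar>)" by (rule sum_abs)
      also have "\<dots> \<le> (\<Sum>i<n. eta * \<bar>Phi i l\<bar>)"
      proof (intro sum_mono)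
        fix i assume "i \<in> {..<n}"
        moreover have "\<bar>f i - u i\<bar> \<le> eta" using f[of i] by auto
        ultimately show "\<bar>(y i - u i) * Phi i l\<bar> \<le> eta * \<bar>Phi i l\<bar>"
          by (auto simp: y_def abs_mult intro!: mult_right_mono)
      qed
      finally have "\<bar>\<Sum>i<n. (y i - u i) * Phi i l\<bar> \<le> eta * (\<Sum>i<n. \<bar>Phi i l\<bar>)"
        by (simp add: sum_distrib_left)
      then show "(\<Sum>i<n. (y i - u i) * Phi i l)\<^sup>2 \<le> (eta * (\<Sum>i<n. \<bar>Phi i l\<bar>))\<^sup>2"
        by (metis abs_ge_zero abs_le_square_iff abs_of_nonneg order_trans)
    qed
    also have "\<dots> = eta\<^sup>2 * C" by (simp only: C_def power_mult_distrib sum_distrib_left[of "eta\<^sup>2"])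
    also have "\<dots> = e * C / (C + 1)" using e C0 by (simp add: eta_def)
    also have "\<dots> \<le> e" using e C0 by (simp add: field_simps)
    finally have "?S - e \<le> ?G y" unfolding G by simp
    also have "?G y \<le> (SUP y\<in>?Q. ?G y)" using bdd yQ by (rule cSUP_upper2) simp
    finally show "?S \<le> (SUP y\<in>?Q. ?G y) + e" by simp
  qed
  ultimately show ?thesis by simp
qed

text \<open>The minimum-norm solution is not continuous in the data, so measurability of \<open>SU1\<close> goes
  through its representation as a supremum of countably many polynomials.\<close>

lemma measurable_SU1:
  assumes d: "0 < bl_d n p" and lam: "0 < bl_lambda n p q r 0"
    and coords: "\<And>i l. i < n \<Longrightarrow> l < bl_d n p \<Longrightarrow> (\<lambda>\<omega>. \<omega> (i, l)) \<in> borel_measurable M"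
  shows "SU1 n p q r \<in> borel_measurable M"
proof -
  let ?Q = "PiE {..<n} (\<lambda>_. \<rat>) :: (nat \<Rightarrow> real) set"
  let ?G = "\<lambda>y \<omega>. 2 * (\<Sum>i<n. y i * \<omega> (i, 0)) - (\<Sum>l<bl_d n p. (\<Sum>i<n. y i * \<omega> (i, l))\<^sup>2)"
  have SUP_eq: "SU1 n p q r \<omega> = (SUP y\<in>?Q. ?G y \<omega>)" and bdd: "bdd_above ((\<lambda>y. ?G y \<omega>) ` ?Q)" for \<omega>
  proof -
    obtain u where u: "\<forall>i<n. (\<Sum>j<bl_d n p. \<omega> (i, j) * (\<Sum>m<n. u m * \<omega> (m, j))) = \<omega> (i, 0)"
      using first_column_in_gram_range[OF d, of n "\<lambda>i j. \<omega> (i, j)"] by blast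
    note G = gram_form_variational[where Phi="\<lambda>i j. \<omega> (i, j)", OF u]
    show "SU1 n p q r \<omega> = (SUP y\<in>?Q. ?G y \<omega>)"
      using SU1_eq_gram_form[OF d lam u] gram_form_eq_SUP_rat[where Phi="\<lambda>i j. \<omega> (i, j)", OF u] by simp
    have "?G y \<omega> \<le> (\<Sum>i<n. u i * \<omega> (i, 0))" for y
      unfolding G by (simp add: sum_nonneg)
    then show "bdd_above ((\<lambda>y. ?G y \<omega>) ` ?Q)" by (intro bdd_aboveI) auto
  qed
  have "countable ?Q" by (rule countable_PiE) (auto simp: countable_rat)
  moreover have "?G y \<in> borel_measurable M" for y
    using coords d by (intro borel_measurable_diff borel_measurable_times borel_measurable_const
        borel_measurable_sum borel_measurable_power) auto
  ultimately have "(\<lambda>\<omega>. SUP y\<in>?Q. ?G y \<omega>) \<in> borel_measurable M"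
    using bdd by (rule borel_measurable_cSUP)
  moreover have "SU1 n p q r = (\<lambda>\<omega>. SUP y\<in>?Q. ?G y \<omega>)"
    by (rule ext) (rule SUP_eq)
  ultimately show ?thesis by simp
qed

section \<open>The bi-level ensemble\<close>

text \<open>The last two conditions make the union bounds over the grids for the bulk and for the
  spike block smaller than \<open>3 exp (- sqrt n)\<close> each.\<close>

definition bl_large :: "real \<Rightarrow> real \<Rightarrow> real \<Rightarrow> nat \<Rightarrow> bool" where
  "bl_large p q r n \<longleftrightarrow>
     4 \<le> real n \<and> real n powr (-q) \<le> 1/2 \<and> 1 \<le> real n powr p - 1 - real n powr r \<and>
     real n * ln (32 * real n + 1) - (real n powr p - 1 - real n powr r) / 4 \<le> - sqrt (real n) \<and>
     real n powr ((1 + r) / 2) * ln (33 * real n) - real n / 4 \<le> - sqrt (real n)"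

lemma eventually_bl_large:
  fixes p q r :: real
  assumes "1 < p" "0 \<le> r" "r < 1" "0 < q"
  shows "eventually (bl_large p q r) sequentially"
proof -
  have "(1 + r) / 2 < 1" using assms by simp
  then have "eventually (\<lambda>x::real. 4 \<le> x \<and> x powr (-q) \<le> 1/2 \<and> 1 \<le> x powr p - 1 - x powr r \<and>
      x * ln (32 * x + 1) - (x powr p - 1 - x powr r) / 4 \<le> - sqrt x \<and>
      x powr ((1 + r) / 2) * ln (33 * x) - x / 4 \<le> - sqrt x) at_top"
    using assms by (intro eventually_conj; real_asymp)
  from eventually_compose_filterlim[OF this filterlim_real_sequentially]
  show ?thesis by (rule eventually_mono) (simp add: bl_large_def)
qed

lemma bl_dimensions:
  assumes large: "bl_large p q r n" and r: "0 \<le> r"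
  shows "1 \<le> bl_s n r" "bl_s n r < bl_d n p"
    and "real n powr p - 1 - real n powr r < real (bl_d n p) - real (bl_s n r)"
    and "real (bl_s n r) \<le> real n powr r" "real n powr r \<le> 2 * real (bl_s n r)"
proof -
  have n4: "4 \<le> real n" and gap: "1 \<le> real n powr p - 1 - real n powr r"
    using large by (simp_all add: bl_large_def)
  have nr1: "1 \<le> real n powr r" using n4 r by (intro ge_one_powr_ge_zero) auto
  have "real (bl_d n p) = of_int \<lfloor>real n powr p\<rfloor>" by (simp add: bl_d_def)
  then have d: "real n powr p - 1 < real (bl_d n p)" "real (bl_d n p) \<le> real n powr p"
    by linarith+
  have "real (bl_s n r) = of_int \<lfloor>real n powr r\<rfloor>" using nr1 by (simp add: bl_s_def)
  then have s: "real n powr r - 1 < real (bl_s n r)" "real (bl_s n r) \<le> real n powr r"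
    by linarith+
  show s1: "1 \<le> bl_s n r" using s nr1 by linarith
  show "real (bl_s n r) \<le> real n powr r" by (fact s(2))
  show "real n powr r \<le> 2 * real (bl_s n r)"
  proof (cases "real n powr r < 2")
    case True
    then show ?thesis using s1 by linarith
  qed (use s in linarith)
  show gap_ds: "real n powr p - 1 - real n powr r < real (bl_d n p) - real (bl_s n r)"
    using d s by linarith
  then show "bl_s n r < bl_d n p" using gap by linarith
qed

lemma grid_union_bound_le:
  fixes y :: real
  assumes "real N * ln (32 * real N + 1) - real T / 4 \<le> - y" and "y \<le> real (N * T) / 2"
  shows "real ((32 * N + 1) ^ N) * (2 * exp (- real T / 4)) + exp (- real (N * T) / 2) \<le> 3 * exp (- y)"
proof -
  have "real ((32 * N + 1) ^ N) = exp (ln (32 * real N + 1)) ^ N" by (simp add: add.commute)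
  also have "\<dots> = exp (real N * ln (32 * real N + 1))" by (rule exp_of_nat_mult[symmetric])
  finally have "real ((32 * N + 1) ^ N) * (2 * exp (- real T / 4))
      = 2 * (exp (real N * ln (32 * real N + 1)) * exp (- real T / 4))" by simp
  also have "\<dots> = 2 * exp (real N * ln (32 * real N + 1) - real T / 4)"
    by (simp add: exp_add[symmetric])
  also have "\<dots> \<le> 2 * exp (- y)" using assms(1) by simp
  finally have "real ((32 * N + 1) ^ N) * (2 * exp (- real T / 4)) \<le> 2 * exp (- y)" .
  moreover have "exp (- real (N * T) / 2) \<le> exp (- y)" using assms(2) by simp
  ultimately show ?thesis by linarith
qed

lemma odds_bounds_large:
  fixes sig m :: real
  assumes s: "0 < sig" "sig < 1" and m: "1 \<le> m"
    and A: "m * (1 - sig) \<le> 60 * sig" and B: "sig \<le> 240 * m * (1 - sig)"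
  shows "1 / (1 + 60 / m) \<le> sig \<and> sig \<le> 1 / (1 + 1/240 / m) \<and>
    1/241 / m \<le> 1 - sig \<and> 1 - sig \<le> 60 / m"
proof -
  have "1 \<le> (240 * m + 1) * (1 - sig)" using B by (simp add: algebra_simps)
  also have "\<dots> \<le> 241 * m * (1 - sig)" using m s by (intro mult_right_mono) auto
  finally have "1/241 / m \<le> 1 - sig" using m by (simp add: field_simps)
  moreover have "1 - sig \<le> 60 / m"
    using A s m by (simp add: field_simps)
  ultimately show ?thesis using A B m s by (simp add: field_simps)
qed

lemma odds_bounds_small:
  fixes sig m :: real
  assumes s: "0 < sig" "sig < 1" and m: "0 < m" "m \<le> 1"
    and A: "m * (1 - sig) \<le> 60 * sig" and B: "sig \<le> 240 * m * (1 - sig)"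
  shows "1/61 * m \<le> sig \<and> sig \<le> 240 * m \<and> 1 / (1 + 240 * m) \<le> 1 - sig \<and> 1 - sig \<le> 1 / (1 + 1/60 * m)"
proof -
  have "m \<le> (60 + m) * sig" using A by (simp add: algebra_simps)
  also have "\<dots> \<le> 61 * sig" using m s by (intro mult_right_mono) auto
  finally have "1/61 * m \<le> sig" by simp
  moreover have "sig \<le> 240 * m" using B m s by (smt (verit) mult_left_le mult_pos_pos)
  ultimately show ?thesis using A B m s by (simp add: field_simps)
qed

definition survival_bounds ::
    "real \<Rightarrow> real \<Rightarrow> real \<Rightarrow> real \<Rightarrow> real \<Rightarrow> real \<Rightarrow> real \<Rightarrow> real \<Rightarrow> nat \<Rightarrow> real \<Rightarrow> real \<Rightarrow> real \<Rightarrow> bool" where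
  "survival_bounds L1 U1 L2 U2 Lb1 Ub1 Lb2 Ub2 n q r x \<longleftrightarrow>
    (if q < 1 - r then
       1 / (1 + L1 * real n powr (q - (1 - r))) \<le> x \<and>
       x \<le> 1 / (1 + U1 * real n powr (q - (1 - r))) \<and>
       Lb1 * real n powr (q - (1 - r)) \<le> 1 - x \<and>
       1 - x \<le> Ub1 * real n powr (q - (1 - r))
     else
       L2 * real n powr ((1 - r) - q) \<le> x \<and>
       x \<le> U2 * real n powr ((1 - r) - q) \<and>
       1 / (1 + Lb2 * real n powr ((1 - r) - q)) \<le> 1 - x \<and>
       1 - x \<le> 1 / (1 + Ub2 * real n powr ((1 - r) - q)))"

lemma survival_bounds_of_odds:
  fixes sig :: real
  assumes s: "0 < sig" "sig < 1" and n: "1 \<le> real n" and qr: "q \<noteq> 1 - r"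
    and A: "real n powr (1 - r - q) * (1 - sig) \<le> 60 * sig"
    and B: "sig \<le> 240 * real n powr (1 - r - q) * (1 - sig)"
  shows "survival_bounds 60 (1/240) (1/61) 240 (1/241) 60 240 (1/60) n q r sig"
proof (cases "q < 1 - r")
  case True
  define m where "m = real n powr (1 - r - q)"
  have m1: "1 \<le> m" unfolding m_def using n True by (intro ge_one_powr_ge_zero) auto
  have "real n powr (q - (1 - r)) = 1 / m"
    using n by (simp add: m_def powr_minus_divide[symmetric])
  then show ?thesis
    using odds_bounds_large[OF s m1 A[folded m_def] B[folded m_def]] True
    by (simp add: survival_bounds_def)
next
  case False
  define m where "m = real n powr (1 - r - q)"
  have "m \<le> real n powr 0" unfolding m_def using n False qr by (intro powr_mono) auto
  then have m: "0 < m" "m \<le> 1" using n by (simp_all add: m_def)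
  show ?thesis
    using odds_bounds_small[OF s m A[folded m_def] B[folded m_def]] False
    by (simp add: survival_bounds_def m_def)
qed

lemma bl_lambda_pos:
  assumes large: "bl_large p q r n" and r: "0 \<le> r"
  shows "0 < bl_lambda n p q r j"
proof -
  have "0 < bl_a n q" "bl_a n q \<le> 1/2"
    using large by (simp_all add: bl_large_def bl_a_def)
  then show ?thesis
    using bl_dimensions[OF large r] by (simp add: bl_lambda_def Let_def)
qed

lemma bl_gaussian_array:
  assumes "bl_large p q r n" "0 \<le> r"
  shows "gaussian_array ({..<n} \<times> {..<bl_d n p}) (\<lambda>(i, j). sqrt (bl_lambda n p q r j))"
  using bl_lambda_pos[OF assms] by unfold_locales auto

lemma bl_odds_bounds:
  fixes sig :: real
  assumes large: "bl_large p q r n" and r: "0 \<le> r" and s01: "0 < sig" "sig < 1"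
  defines "d \<equiv> bl_d n p" and "s \<equiv> bl_s n r" and "a \<equiv> bl_a n q"
  defines "VB \<equiv> (1 - a) * real d" and "VS \<equiv> a * real d / real s * real n"
  assumes lower: "VS / 10 * (1 - sig) \<le> 6 * VB * sig" and upper: "VB / 10 * sig \<le> 6 * VS * (1 - sig)"
  shows "real n powr (1 - r - q) * (1 - sig) \<le> 60 * sig \<and> sig \<le> 240 * real n powr (1 - r - q) * (1 - sig)"
proof -
  define x where "x = real n"
  define m where "m = x powr (1 - r - q)"
  note dims = bl_dimensions[OF large r, folded d_def s_def x_def]
  have x0: "0 < x" and a: "a = x powr (-q)" "0 < a" "a \<le> 1/2"
    using large by (simp_all add: bl_large_def x_def a_def bl_a_def)
  have s0: "0 < real s" using dims by simp
  have VB0: "0 < VB" using a dims by (simp add: VB_def)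
  \<comment> \<open>the odds are governed by \<open>kappa = VS / VB\<close>, which is within a factor 4 of \<open>m\<close>\<close>
  define kappa where "kappa = a * x / (real s * (1 - a))"
  have VS_eq: "VS = kappa * VB" using a dims by (simp add: VS_def VB_def kappa_def x_def field_simps)
  have m_eq: "m = a * x / x powr r" using x0 by (simp add: m_def a powr_diff powr_minus field_simps flip: powr_add)
  have "m \<le> a * x / real s"
    unfolding m_eq using dims s0 a x0 by (intro divide_left_mono) auto
  also have "\<dots> \<le> kappa"
    unfolding kappa_def using s0 a x0 by (intro divide_left_mono) (auto intro: mult_left_le)
  finally have k1: "m \<le> kappa" .
  have "x powr r / 4 = (x powr r / 2) * (1/2)" by simp
  also have "\<dots> \<le> real s * (1 - a)" using dims a by (intro mult_mono) auto
  finally have "kappa \<le> a * x / (x powr r / 4)"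
    unfolding kappa_def using a x0 s0 by (intro divide_left_mono) auto
  then have k2: "kappa \<le> 4 * m" by (simp add: m_eq mult.commute)
  have "VB / 10 * (kappa * (1 - sig)) \<le> VB / 10 * (60 * sig)" using lower by (simp add: VS_eq algebra_simps)
  then have "kappa * (1 - sig) \<le> 60 * sig" using VB0 by simp
  moreover have "VB / 10 * sig \<le> VB / 10 * (60 * kappa * (1 - sig))" using upper by (simp add: VS_eq algebra_simps)
  then have "sig \<le> 60 * kappa * (1 - sig)" using VB0 by simp
  moreover have "m * (1 - sig) \<le> kappa * (1 - sig)" "kappa * (1 - sig) \<le> 4 * m * (1 - sig)"
    using k1 k2 s01 by (simp_all add: mult_right_mono)
  ultimately show ?thesis by (simp add: m_def x_def)
qed

text \<open>In the bi-level ensemble the scales are \<open>VB = \<lambda>\<^sub>j (d - s) = (1 - a) d\<close> for the bulk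
  columns \<open>j \<ge> s\<close> and \<open>VS = n \<lambda>\<^sub>1 = n a d / s\<close> for the spike block; the factors \<open>1/10\<close> and
  \<open>6\<close> are those delivered by the grid argument.\<close>

definition spectral_bounds :: "nat \<Rightarrow> nat \<Rightarrow> nat \<Rightarrow> real \<Rightarrow> real \<Rightarrow> (nat \<times> nat \<Rightarrow> real) \<Rightarrow> bool" where
  "spectral_bounds n s d VB VS omega \<longleftrightarrow>
    (\<forall>v. VB / 10 * (\<Sum>i<n. (v i)\<^sup>2) \<le> (\<Sum>j\<in>{s..<d}. (\<Sum>i<n. v i * omega (i, j))\<^sup>2) \<and>
         (\<Sum>j\<in>{s..<d}. (\<Sum>i<n. v i * omega (i, j))\<^sup>2) \<le> 6 * VB * (\<Sum>i<n. (v i)\<^sup>2)) \<and>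
    (\<forall>w. VS / 10 * (\<Sum>j<s. (w j)\<^sup>2) \<le> (\<Sum>i<n. (\<Sum>j<s. w j * omega (i, j))\<^sup>2) \<and>
         (\<Sum>i<n. (\<Sum>j<s. w j * omega (i, j))\<^sup>2) \<le> 6 * VS * (\<Sum>j<s. (w j)\<^sup>2))"

lemma SU1_survival_bounds:
  fixes omega :: "nat \<times> nat \<Rightarrow> real"
  assumes large: "bl_large p q r n" and r: "0 \<le> r" and qr: "q \<noteq> 1 - r"
  defines "d \<equiv> bl_d n p" and "s \<equiv> bl_s n r" and "a \<equiv> bl_a n q"
  defines "VB \<equiv> (1 - a) * real d" and "VS \<equiv> a * real d / real s * real n"
  assumes spectral: "spectral_bounds n s d VB VS omega"
  shows "survival_bounds 60 (1/240) (1/61) 240 (1/241) 60 240 (1/60) n q r (SU1 n p q r omega)"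
proof -
  note bulk = spectral[unfolded spectral_bounds_def, THEN conjunct1, rule_format]
  note spike = spectral[unfolded spectral_bounds_def, THEN conjunct2, rule_format]
  note dims = bl_dimensions[OF large r, folded d_def s_def]
  have a: "0 < a" "a \<le> 1/2" and n: "1 \<le> real n"
    using large by (simp_all add: bl_large_def a_def bl_a_def)
  have VB0: "0 < VB" and VS0: "0 < VS" using a dims n by (simp_all add: VB_def VS_def)
  obtain u where u: "\<forall>i<n. (\<Sum>j<d. omega (i, j) * (\<Sum>m<n. u m * omega (m, j))) = omega (i, 0)"
    using first_column_in_gram_range[of d n "\<lambda>i j. omega (i, j)"] dims by auto
  define sig where "sig = (\<Sum>i<n. u i * omega (i, 0))"
  have SU1_sig: "SU1 n p q r omega = sig"
    unfolding sig_def using dims bl_lambda_pos[OF large r] u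
    by (intro SU1_eq_gram_form) (simp_all add: d_def)
  have x: "VS / 10 \<le> (\<Sum>i<n. (omega (i, 0))\<^sup>2)" "(\<Sum>i<n. (omega (i, 0))\<^sup>2) \<le> 6 * VS"
  proof -
    define e0 where "e0 = (\<lambda>j::nat. if j = 0 then (1::real) else 0)"
    have "(\<Sum>j<s. (e0 j)\<^sup>2) = (\<Sum>j<s. if j = 0 then 1 else 0)"
      by (rule sum.cong) (auto simp: e0_def)
    moreover have "(\<Sum>j<s. e0 j * omega (i, j)) = (\<Sum>j<s. if j = 0 then omega (i, 0) else 0)" for i
      by (rule sum.cong) (auto simp: e0_def)
    ultimately have "(\<Sum>j<s. (e0 j)\<^sup>2) = 1" "(\<Sum>j<s. e0 j * omega (i, j)) = omega (i, 0)" for i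
      using dims by simp_all
    then show "VS / 10 \<le> (\<Sum>i<n. (omega (i, 0))\<^sup>2)" "(\<Sum>i<n. (omega (i, 0))\<^sup>2) \<le> 6 * VS"
      using spike[of e0] by simp_all
  qed
  have upper: "0 < sig \<and> sig < 1 \<and> VB / 10 * sig \<le> 6 * VS * (1 - sig)"
    unfolding sig_def using dims VB0 VS0 x
    by (intro gram_form_upper_bound[where Phi="\<lambda>i j. omega (i, j)", OF _ _ _ bulk[THEN conjunct1] _ _ u])
      auto
  have lower: "VS / 10 * (1 - sig) \<le> 6 * VB * sig"
    unfolding sig_def using dims VS0 upper
    by (intro gram_form_lower_bound[where Phi="\<lambda>i j. omega (i, j)",
          OF _ _ _ spike[THEN conjunct1] bulk[THEN conjunct2] u]) (auto simp: sig_def)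
  have "real n powr (1 - r - q) * (1 - sig) \<le> 60 * sig \<and> sig \<le> 240 * real n powr (1 - r - q) * (1 - sig)"
    using bl_odds_bounds[OF large r] upper lower
    unfolding VB_def VS_def d_def s_def a_def by blast
  then show ?thesis
    unfolding SU1_sig using survival_bounds_of_odds upper n qr by blast
qed

lemma sqrt_le_half: "4 \<le> x \<Longrightarrow> sqrt x \<le> x / 2"
proof -
  assume x: "4 \<le> x"
  then have "2 \<le> sqrt x" using real_sqrt_le_mono[of 4 x] by simp
  then have "2 * sqrt x \<le> sqrt x * sqrt x" using x by (intro mult_right_mono) auto
  then show ?thesis using x by simp
qed

lemma bl_union_bounds:
  assumes large: "bl_large p q r n" and r: "0 \<le> r" "r < 1"
  defines "d \<equiv> bl_d n p" and "s \<equiv> bl_s n r"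
  shows "real ((32 * n + 1) ^ n) * (2 * exp (- real (card {s..<d}) / 4)) + exp (- real (n * card {s..<d}) / 2)
      \<le> 3 * exp (- sqrt (real n))"
    and "real ((32 * s + 1) ^ s) * (2 * exp (- real n / 4)) + exp (- real (s * n) / 2)
      \<le> 3 * exp (- sqrt (real n))"
proof -
  define x where "x = real n"
  note dims = bl_dimensions[OF large r(1), folded d_def s_def x_def]
  have n4: "4 \<le> x"
    and bulk_large: "x * ln (32 * x + 1) - (x powr p - 1 - x powr r) / 4 \<le> - sqrt x"
    and spike_large: "x powr ((1 + r) / 2) * ln (33 * x) - x / 4 \<le> - sqrt x"
    using large by (simp_all add: bl_large_def x_def)
  have "(x powr p - 1 - x powr r) / 4 \<le> (real d - real s) / 4"
    using dims by (simp add: divide_right_mono)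
  then have "x * ln (32 * x + 1) - (real d - real s) / 4 \<le> - sqrt x"
    using bulk_large by linarith
  then have "x * ln (32 * x + 1) - real (card {s..<d}) / 4 \<le> - sqrt x"
    using dims by (simp add: of_nat_diff)
  moreover have "n * 1 \<le> n * card {s..<d}" using dims by (intro mult_le_mono2) simp
  then have "real n \<le> real (n * card {s..<d})" by (subst of_nat_le_iff) simp
  then have "sqrt x \<le> real (n * card {s..<d}) / 2" using sqrt_le_half[OF n4] by (simp add: x_def)
  ultimately show "real ((32 * n + 1) ^ n) * (2 * exp (- real (card {s..<d}) / 4))
      + exp (- real (n * card {s..<d}) / 2) \<le> 3 * exp (- sqrt (real n))"
    using grid_union_bound_le[of n "card {s..<d}" "sqrt x"] by (simp add: x_def)
  have "x powr r \<le> x powr ((1 + r) / 2)" using n4 r by (intro powr_mono) auto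
  then have s_le: "real s \<le> x powr ((1 + r) / 2)" using dims by linarith
  have "x powr r \<le> x powr 1" using n4 r by (intro powr_mono) auto
  then have "x powr r \<le> x" using n4 by simp
  with s_le have "real s * ln (32 * real s + 1) \<le> x powr ((1 + r) / 2) * ln (33 * x)"
    using dims n4 by (intro mult_mono ln_mono) auto
  then have "real s * ln (32 * real s + 1) - real n / 4 \<le> - sqrt x"
    using spike_large by (simp add: x_def)
  moreover have "1 * n \<le> s * n" using dims by (intro mult_le_mono1) simp
  then have "real n \<le> real (s * n)" by (subst of_nat_le_iff) simp
  then have "sqrt x \<le> real (s * n) / 2" using sqrt_le_half[OF n4] by (simp add: x_def)
  ultimately show "real ((32 * s + 1) ^ s) * (2 * exp (- real n / 4)) + exp (- real (s * n) / 2)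
      \<le> 3 * exp (- sqrt (real n))"
    using grid_union_bound_le[of s n "sqrt x"] by (simp add: x_def)
qed

lemma bl_spectral_event:
  assumes large: "bl_large p q r n" and r: "0 \<le> r" "r < 1"
  defines "d \<equiv> bl_d n p" and "s \<equiv> bl_s n r" and "a \<equiv> bl_a n q"
  defines "VB \<equiv> (1 - a) * real d" and "VS \<equiv> a * real d / real s * real n"
  shows "\<exists>Bad\<in>sets (bl_train_measure n p q r).
    measure (bl_train_measure n p q r) Bad \<le> 6 * exp (- sqrt (real n)) \<and>
    (\<forall>\<omega>\<in>space (bl_train_measure n p q r) - Bad. spectral_bounds n s d VB VS \<omega>)"
proof -
  define K where "K = {..<n} \<times> {..<d}"
  define sdv where "sdv = (\<lambda>(i::nat, j). sqrt (bl_lambda n p q r j))"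
  note dims = bl_dimensions[OF large r(1), folded d_def s_def]
  have n0: "0 < n" and a: "0 < a" "a \<le> 1/2"
    using large by (simp_all add: bl_large_def a_def bl_a_def)
  have dsr: "0 < real d - real s" using dims by simp
  have lam: "sdv (i, j) = sqrt (if j < s then a * real d / real s else (1 - a) * real d / (real d - real s))" for i j
    by (simp add: sdv_def bl_lambda_def Let_def d_def s_def a_def)
  interpret G: gaussian_array K sdv
    unfolding K_def sdv_def d_def using bl_gaussian_array[OF large r(1)] .
  have P_eq: "bl_train_measure n p q r = G.P"
    unfolding G.P_def G.coord_measure_def unfolding bl_train_measure_def K_def d_def
    by (rule PiM_cong) (auto simp: sdv_def)
  interpret bulk: gaussian_blocks K sdv "{s..<d}" n "\<lambda>t i. (i, t)" fst "sqrt ((1 - a) * real d / (real d - real s))"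
    by unfold_locales (use dims a dsr n0 in \<open>auto simp: K_def lam\<close>)
  interpret spike: gaussian_blocks K sdv "{..<n}" s "\<lambda>t i. (t, i)" snd "sqrt (a * real d / real s)"
    by unfold_locales (use dims a n0 in \<open>auto simp: K_def lam\<close>)
  have VB_eq: "(sqrt ((1 - a) * real d / (real d - real s)))\<^sup>2 * real (card {s..<d}) = VB"
    using a dsr dims by (simp add: VB_def of_nat_diff)
  obtain BadB where BadB: "BadB \<in> sets G.P"
    "measure G.P BadB \<le> real ((32 * n + 1) ^ n) * (2 * exp (- real (card {s..<d}) / 4))
      + exp (- real (n * card {s..<d}) / 2)"
    "\<forall>\<omega>\<in>space G.P - BadB. \<forall>v.
       VB / 10 * (\<Sum>i<n. (v i)\<^sup>2) \<le> (\<Sum>j\<in>{s..<d}. (\<Sum>i<n. v i * \<omega> (i, j))\<^sup>2) \<and>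
       (\<Sum>j\<in>{s..<d}. (\<Sum>i<n. v i * \<omega> (i, j))\<^sup>2) \<le> 6 * VB * (\<Sum>i<n. (v i)\<^sup>2)"
    using bulk.block_form_concentration unfolding VB_eq by blast
  have VS_eq: "(sqrt (a * real d / real s))\<^sup>2 * real (card {..<n}) = VS"
    using a dims by (simp add: VS_def)
  obtain BadS where BadS: "BadS \<in> sets G.P"
    "measure G.P BadS \<le> real ((32 * s + 1) ^ s) * (2 * exp (- real (card {..<n}) / 4))
      + exp (- real (s * card {..<n}) / 2)"
    "\<forall>\<omega>\<in>space G.P - BadS. \<forall>w.
       VS / 10 * (\<Sum>j<s. (w j)\<^sup>2) \<le> (\<Sum>i<n. (\<Sum>j<s. w j * \<omega> (i, j))\<^sup>2) \<and>
       (\<Sum>i<n. (\<Sum>j<s. w j * \<omega> (i, j))\<^sup>2) \<le> 6 * VS * (\<Sum>j<s. (w j)\<^sup>2)"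
    using spike.block_form_concentration unfolding VS_eq by blast
  have "measure G.P (BadB \<union> BadS) \<le> 6 * exp (- sqrt (real n))"
    using measure_Un_le[OF BadB(1) BadS(1)] BadB(2) BadS(2) bl_union_bounds[OF large r]
    unfolding d_def s_def by simp
  moreover have "spectral_bounds n s d VB VS \<omega>" if "\<omega> \<in> space G.P - (BadB \<union> BadS)" for \<omega>
    unfolding spectral_bounds_def using BadB(3) BadS(3) that by blast
  ultimately show ?thesis
    using BadB(1) BadS(1) unfolding P_eq by blast
qed

lemma bl_survival_prob:
  assumes large: "bl_large p q r n" and r: "0 \<le> r" "r < 1" and qr: "q \<noteq> 1 - r"
  shows "1 - 8 * exp (- sqrt (real n)) \<le> measure (bl_train_measure n p q r)
     {omega \<in> space (bl_train_measure n p q r).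
        survival_bounds 60 (1/240) (1/61) 240 (1/241) 60 240 (1/60) n q r (SU1 n p q r omega)}"
proof -
  define K where "K = {..<n} \<times> {..<bl_d n p}"
  define sdv where "sdv = (\<lambda>(i::nat, j). sqrt (bl_lambda n p q r j))"
  interpret G: gaussian_array K sdv
    unfolding K_def sdv_def using bl_gaussian_array[OF large r(1)] .
  have P_eq: "bl_train_measure n p q r = G.P"
    unfolding G.P_def G.coord_measure_def unfolding bl_train_measure_def K_def
    by (rule PiM_cong) (auto simp: sdv_def)
  define Good where "Good = {omega \<in> space G.P.
      survival_bounds 60 (1/240) (1/61) 240 (1/241) 60 240 (1/60) n q r (SU1 n p q r omega)}"
  have [measurable]: "SU1 n p q r \<in> borel_measurable G.P"
    using bl_dimensions[OF large r(1)] bl_lambda_pos[OF large r(1)]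
    by (intro measurable_SU1 G.measurable_coord) (auto simp: K_def)
  have Good_sets: "Good \<in> sets G.P"
    unfolding Good_def survival_bounds_def by measurable
  obtain Bad where Bad: "Bad \<in> sets G.P" "measure G.P Bad \<le> 6 * exp (- sqrt (real n))"
    and spectral: "\<And>\<omega>. \<omega> \<in> space G.P - Bad \<Longrightarrow> spectral_bounds n (bl_s n r) (bl_d n p)
        ((1 - bl_a n q) * real (bl_d n p)) (bl_a n q * real (bl_d n p) / real (bl_s n r) * real n) \<omega>"
    using bl_spectral_event[OF large r] unfolding P_eq by blast
  have good: "\<omega> \<in> Good" if "\<omega> \<in> space G.P - Bad" for \<omega>
    using SU1_survival_bounds[OF large r(1) qr spectral[OF that]] that by (simp add: Good_def)
  have "1 - measure G.P Good = measure G.P (space G.P - Good)"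
    by (rule G.prob_compl[OF Good_sets, symmetric])
  also have "\<dots> \<le> measure G.P Bad"
    using good Bad(1) by (intro G.finite_measure_mono) auto
  moreover have "0 \<le> exp (- sqrt (real n))" by simp
  ultimately show ?thesis
    using Bad(2) unfolding P_eq Good_def by linarith
qed

theorem lemma12:
  fixes p r q :: real
  assumes "p > 1" "0 \<le> r" "r < 1" "0 < q" "q < p - r" "q \<noteq> 1 - r"
  shows "\<exists>L1 U1 L2 U2 Lb1 Ub1 Lb2 Ub2 :: real.
           L1 > 0 \<and> U1 > 0 \<and> L2 > 0 \<and> U2 > 0 \<and> Lb1 > 0 \<and> Ub1 > 0 \<and> Lb2 > 0 \<and> Ub2 > 0 \<and>
           (\<exists>N. \<forall>n\<ge>N.
              measure (bl_train_measure n p q r)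
                {omega \<in> space (bl_train_measure n p q r).
                   (if q < 1 - r then
                      1 / (1 + L1 * real n powr (q - (1 - r))) \<le> SU1 n p q r omega \<and>
                      SU1 n p q r omega \<le> 1 / (1 + U1 * real n powr (q - (1 - r))) \<and>
                      Lb1 * real n powr (q - (1 - r)) \<le> 1 - SU1 n p q r omega \<and>
                      1 - SU1 n p q r omega \<le> Ub1 * real n powr (q - (1 - r))
                    else
                      L2 * real n powr ((1 - r) - q) \<le> SU1 n p q r omega \<and>
                      SU1 n p q r omega \<le> U2 * real n powr ((1 - r) - q) \<and>
                      1 / (1 + Lb2 * real n powr ((1 - r) - q)) \<le> 1 - SU1 n p q r omega \<and>
                      1 - SU1 n p q r omega \<le> 1 / (1 + Ub2 * real n powr ((1 - r) - q)))}
              \<ge> 1 - 8 * exp (- sqrt (real n)))"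
proof -
  obtain N where large: "\<And>n. N \<le> n \<Longrightarrow> bl_large p q r n"
    using eventually_bl_large[OF assms(1-4)] unfolding eventually_sequentially by blast
  note main = bl_survival_prob[OF large assms(2,3,6), unfolded survival_bounds_def]
  have pos: "(0::real) < 60" "(0::real) < 1/240" "(0::real) < 1/61" "(0::real) < 240"
    "(0::real) < 1/241" "(0::real) < 1/60" by simp_all
  show ?thesis
    by (rule exI[of _ 60], rule exI[of _ "1/240"], rule exI[of _ "1/61"], rule exI[of _ 240],
        rule exI[of _ "1/241"], rule exI[of _ 60], rule exI[of _ 240], rule exI[of _ "1/60"],
        intro conjI pos, rule exI[of _ N], intro allI impI, erule main)
qed

end
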